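(* Let $(X,x_0)$ be a pointed space. Then $\mathcal{H}_n(X,x_0)$ is an abelian group for all $n\geq2$.
   Context: For $n\geq1$, the $n$-dimensional Hawaiian earring is $\mathbb{H}^n=\{(r_0,\dots,r_n)\in\mathbb{R}^{n+1} : (r_0-1/k)^2+\sum_{i=1}^n r_i^2=(1/k)^2 \text{ for some } k\in\mathbb{N}\}$ with base point $\theta=(0,\dots,0)$; $S^n_k$ denotes the $n$-sphere of radius $1/k$ in it. For a pointed space $(X,x_0)$, the $n$-Hawaiian group $\mathcal{H}_n(X,x_0)$ is the set of pointed homotopy classes (rel $\{\theta\}$) of continuous maps $f:(\mathbb{H}^n,\theta)\to(X,x_0)$, with group operation $[f][g]=[f\ast g]$, where $(f\ast g)|_{S^n_k}$ is the usual concatenation (as in $\pi_n$) of $f|_{S^n_k}$ and $g|_{S^n_k}$ for each $k$. *)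

theory Defs
  imports "HOL-Analysis.Analysis" "HOL-Algebra.Group"
begin

text \<open>Points of R^(n+1) are functions nat => real vanishing from index n+1 on
  (coordinates r_0,...,r_n), with the topology Euclidean_space (Suc n).\<close>

definition hbase :: "nat \<Rightarrow> real" where
  "hbase = (\<lambda>i. 0)"

definition hsphere :: "nat \<Rightarrow> nat \<Rightarrow> (nat \<Rightarrow> real) set" where
  "hsphere n k = {r. (\<forall>i>n. r i = 0) \<and>
      (r 0 - 1 / real k)^2 + (\<Sum>i\<in>{1..n}. (r i)^2) = (1 / real k)^2}"

definition hawaiian :: "nat \<Rightarrow> (nat \<Rightarrow> real) set" where
  "hawaiian n = (\<Union>k\<in>{1..}. hsphere n k)"

definition hawaiian_top :: "nat \<Rightarrow> (nat \<Rightarrow> real) topology" where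
  "hawaiian_top n = subtopology (Euclidean_space (Suc n)) (hawaiian n)"

text \<open>The index k of the sphere containing a point p different from the base point.\<close>
definition hindex :: "nat \<Rightarrow> (nat \<Rightarrow> real) \<Rightarrow> nat" where
  "hindex n p = (THE k. k \<ge> 1 \<and> p \<in> hsphere n k)"

definition hcube :: "nat \<Rightarrow> (nat \<Rightarrow> real) set" where
  "hcube n = {s. (\<forall>i\<in>{1..n}. 0 \<le> s i \<and> s i \<le> 1) \<and> (\<forall>i. i = 0 \<or> n < i \<longrightarrow> s i = 0)}"

text \<open>A fixed standard quotient map I^n -> S^n_k, collapsing the boundary of the cube
  to the base point and injective on the interior (identifying I^n / boundary with S^n_k).\<close>
definition hquot :: "nat \<Rightarrow> nat \<Rightarrow> (nat \<Rightarrow> real) \<Rightarrow> (nat \<Rightarrow> real)" where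
  "hquot n k s =
     (let v = (\<lambda>i. 2 * s i - 1);
          m = Max ((\<lambda>i. \<bar>v i\<bar>) ` {1..n});
          e = sqrt (\<Sum>i\<in>{1..n}. (v i)^2)
      in (\<lambda>i. if i = 0 then 1 / real k + (1 / real k) * cos (pi * m)
              else if i \<le> n then (if e = 0 then 0 else (1 / real k) * sin (pi * m) * v i / e)
              else 0))"

definition cube_concat :: "((nat \<Rightarrow> real) \<Rightarrow> 'a) \<Rightarrow> ((nat \<Rightarrow> real) \<Rightarrow> 'a) \<Rightarrow> (nat \<Rightarrow> real) \<Rightarrow> 'a" where
  "cube_concat f g s = (if s 1 \<le> 1/2 then f (s(1 := 2 * s 1)) else g (s(1 := 2 * s 1 - 1)))"

definition hmul :: "nat \<Rightarrow> ((nat \<Rightarrow> real) \<Rightarrow> 'a) \<Rightarrow> ((nat \<Rightarrow> real) \<Rightarrow> 'a) \<Rightarrow> (nat \<Rightarrow> real) \<Rightarrow> 'a" where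
  "hmul n f g p =
     (if p = hbase then f hbase
      else let k = hindex n p
           in cube_concat (f \<circ> hquot n k) (g \<circ> hquot n k)
                 (SOME s. s \<in> hcube n \<and> hquot n k s = p))"

definition hclass :: "nat \<Rightarrow> 'a topology \<Rightarrow> 'a \<Rightarrow> ((nat \<Rightarrow> real) \<Rightarrow> 'a) \<Rightarrow> ((nat \<Rightarrow> real) \<Rightarrow> 'a) set" where
  "hclass n X x0 f = {g. homotopic_with (\<lambda>h. h hbase = x0) (hawaiian_top n) X f g}"

definition hawaiian_group :: "nat \<Rightarrow> 'a topology \<Rightarrow> 'a \<Rightarrow> ((nat \<Rightarrow> real) \<Rightarrow> 'a) set monoid" where
  "hawaiian_group n X x0 =
     \<lparr> carrier = {hclass n X x0 f | f. continuous_map (hawaiian_top n) X f \<and> f hbase = x0},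
       mult = (\<lambda>A B. hclass n X x0 (hmul n (SOME f. f \<in> A) (SOME g. g \<in> B))),
       one = hclass n X x0 (\<lambda>_. x0) \<rparr>"

end

theory Submission
  imports Defs
begin

text \<open>The Hawaiian earring is a quotient of the compact space \<open>radii \<times> I\<^sup>n\<close>, where
  \<open>radii = {0} \<union> {1/k | k \<ge> 1}\<close>: the point \<open>(1/k, s)\<close> goes to \<open>hquot n k s\<close> on the sphere \<open>S\<^sup>n\<^sub>k\<close>, and
  radius 0 together with the boundary of the cube collapses to the base point. Based maps and
  homotopies on the earring can therefore be written as families of cube maps, and on these the
  concatenation of \<open>\<pi>\<^sub>n\<close> can be performed along any cube coordinate, on all spheres at once. The
  product of \<open>\<H>\<^sub>n\<close> is concatenation along the first coordinate; units and inverses are handled by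
  reparametrizing one coordinate, and concatenations along two different coordinates satisfy the
  interchange law on the nose. Since \<open>n \<ge> 2\<close>, the Eckmann--Hilton argument applies and makes
  the product associative and commutative.\<close>

lemma hawaiian_top_eq: "hawaiian_top n = top_of_set (hawaiian n)"
proof -
  have "hawaiian n \<subseteq> {x. \<forall>i\<ge>Suc n. x i = 0}"
    by (auto simp: hawaiian_def hsphere_def)
  then show ?thesis
    unfolding hawaiian_top_def Euclidean_space_def euclidean_product_topology
    by (simp add: subtopology_subtopology Int_absorb1)
qed

lemma hbase_in_hawaiian: "hbase \<in> hawaiian n"
  unfolding hawaiian_def hsphere_def hbase_def by (rule UN_I[of 1]) auto

lemma continuous_on_Max:
  fixes f :: "'i \<Rightarrow> 'a::topological_space \<Rightarrow> 'b::linorder_topology"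
  assumes "finite I" "I \<noteq> {}" "\<And>i. i \<in> I \<Longrightarrow> continuous_on S (f i)"
  shows "continuous_on S (\<lambda>x. Max ((\<lambda>i. f i x) ` I))"
  using assms
proof (induction I rule: finite_ne_induct)
  case (insert a F)
  have "(\<lambda>x. Max ((\<lambda>i. f i x) ` insert a F)) = (\<lambda>x. max (f a x) (Max ((\<lambda>i. f i x) ` F)))"
    using insert.hyps by (auto simp: Max_insert)
  then show ?case using insert by (auto intro: continuous_on_max)
qed simp

lemma continuous_on_coordinate: "continuous_on S (\<lambda>s::nat \<Rightarrow> real. s i)"
  by (rule continuous_on_subset[OF continuous_on_product_coordinates]) auto

lemma continuous_on_fun_upd:
  fixes g :: "'b::topological_space \<Rightarrow> nat \<Rightarrow> real"
  assumes "continuous_on S a" "continuous_on S g"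
  shows "continuous_on S (\<lambda>x. (g x)(j := a x))"
proof (intro continuous_on_coordinatewise_then_product)
  fix i
  show "continuous_on S (\<lambda>x. ((g x)(j := a x)) i)"
    using assms continuous_on_product_then_coordinatewise[OF assms(2)] by (cases "i = j") auto
qed

subsection \<open>The cube and the unit sphere\<close>

definition cube_boundary :: "nat \<Rightarrow> (nat \<Rightarrow> real) \<Rightarrow> bool" where
  "cube_boundary n s \<longleftrightarrow> (\<exists>i\<in>{1..n}. s i = 0 \<or> s i = 1)"

lemma hcube_coordinate: "s \<in> hcube n \<Longrightarrow> j \<in> {1..n} \<Longrightarrow> 0 \<le> s j \<and> s j \<le> 1"
  unfolding hcube_def by auto

lemma hcube_outside: "s \<in> hcube n \<Longrightarrow> i \<notin> {1..n} \<Longrightarrow> s i = 0"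
  unfolding hcube_def by (cases "i = 0") auto

lemma hcube_fun_upd: "s \<in> hcube n \<Longrightarrow> j \<in> {1..n} \<Longrightarrow> 0 \<le> a \<Longrightarrow> a \<le> 1 \<Longrightarrow> s(j := a) \<in> hcube n"
  unfolding hcube_def by auto

lemma cube_boundary_fun_upd: "j \<in> {1..n} \<Longrightarrow> a = 0 \<or> a = 1 \<Longrightarrow> cube_boundary n (s(j := a))"
  unfolding cube_boundary_def by auto

lemma cube_boundary_fun_upd_cases:
  "cube_boundary n s \<Longrightarrow> j \<in> {1..n} \<Longrightarrow> cube_boundary n (s(j := a)) \<or> s j = 0 \<or> s j = 1"
  unfolding cube_boundary_def by (metis fun_upd_other)

lemma hcube_eq_PiE: "hcube n = PiE UNIV (\<lambda>i. if i \<in> {1..n} then {0..1} else {0})"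
proof -
  have "x \<in> hcube n \<longleftrightarrow> (\<forall>i. x i \<in> (if i \<in> {1..n} then {0..1} else {0}))" for x
    unfolding hcube_def by (auto simp: not_le)
  then show ?thesis by (auto simp: PiE_UNIV_domain)
qed

lemma compact_hcube: "compact (hcube n)"
proof -
  have "compactin (powertop_real UNIV) (PiE UNIV (\<lambda>i. if i \<in> {1..n} then {0..1::real} else {0}))"
    by (subst compactin_PiE) auto
  then show ?thesis unfolding hcube_eq_PiE euclidean_product_topology by simp
qed

definition cube_sup :: "nat \<Rightarrow> (nat \<Rightarrow> real) \<Rightarrow> real" where
  "cube_sup n s = Max ((\<lambda>i. \<bar>2 * s i - 1\<bar>) ` {1..n})"

definition cube_norm :: "nat \<Rightarrow> (nat \<Rightarrow> real) \<Rightarrow> real" where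
  "cube_norm n s = sqrt (\<Sum>i\<in>{1..n}. (2 * s i - 1)^2)"

text \<open>This is \<open>hquot\<close> for radius 1; at the centre of the cube, where \<open>cube_norm\<close> vanishes,
  the convention \<open>x / 0 = 0\<close> reproduces the case distinction in \<open>hquot\<close>.\<close>

definition cube_sphere :: "nat \<Rightarrow> (nat \<Rightarrow> real) \<Rightarrow> (nat \<Rightarrow> real)" where
  "cube_sphere n s = (\<lambda>i. if i = 0 then 1 + cos (pi * cube_sup n s)
      else if i \<le> n then sin (pi * cube_sup n s) * (2 * s i - 1) / cube_norm n s else 0)"

lemma hquot_eq_cube_sphere: "hquot n k s = (\<lambda>i. (1 / real k) * cube_sphere n s i)"
  unfolding hquot_def cube_sphere_def cube_sup_def cube_norm_def Let_def
  by (auto simp: fun_eq_iff algebra_simps add_divide_distrib)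

lemma cube_sup_ge: "i \<in> {1..n} \<Longrightarrow> \<bar>2 * s i - 1\<bar> \<le> cube_sup n s"
  unfolding cube_sup_def by (rule Max_ge) auto

lemma cube_sup_attained: "n \<ge> 1 \<Longrightarrow> \<exists>i\<in>{1..n}. \<bar>2 * s i - 1\<bar> = cube_sup n s"
proof -
  assume "n \<ge> 1"
  then have "cube_sup n s \<in> (\<lambda>i. \<bar>2 * s i - 1\<bar>) ` {1..n}"
    unfolding cube_sup_def by (intro Max_in) auto
  then show ?thesis by force
qed

lemma cube_sup_nonneg: "n \<ge> 1 \<Longrightarrow> 0 \<le> cube_sup n s"
  using cube_sup_ge[of 1 n s] by force

lemma cube_sup_le_1: "n \<ge> 1 \<Longrightarrow> s \<in> hcube n \<Longrightarrow> cube_sup n s \<le> 1"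
  using cube_sup_attained[of n s] hcube_coordinate[of s n] by (fastforce simp: abs_le_iff)

lemma cube_sup_eq_0_iff:
  assumes n: "n \<ge> 1" shows "cube_sup n s = 0 \<longleftrightarrow> (\<forall>i\<in>{1..n}. 2 * s i - 1 = 0)"
proof
  assume "cube_sup n s = 0"
  then show "\<forall>i\<in>{1..n}. 2 * s i - 1 = 0" using cube_sup_ge[of _ n s] by (metis abs_le_zero_iff)
next
  assume "\<forall>i\<in>{1..n}. 2 * s i - 1 = 0"
  then show "cube_sup n s = 0" using cube_sup_attained[OF n, of s] by auto
qed

lemma cube_sup_eq_1_iff:
  assumes n: "n \<ge> 1" and s: "s \<in> hcube n"
  shows "cube_sup n s = 1 \<longleftrightarrow> cube_boundary n s"
proof
  assume "cube_sup n s = 1"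
  then obtain i where i: "i \<in> {1..n}" "\<bar>2 * s i - 1\<bar> = 1" using cube_sup_attained[OF n, of s] by auto
  then have "s i = 0 \<or> s i = 1" by (auto simp: abs_eq_iff)
  then show "cube_boundary n s" unfolding cube_boundary_def using i(1) by blast
next
  assume "cube_boundary n s"
  then obtain i where i: "i \<in> {1..n}" "s i = 0 \<or> s i = 1" unfolding cube_boundary_def by auto
  then have "1 \<le> cube_sup n s" using cube_sup_ge[OF i(1), of s] by auto
  then show "cube_sup n s = 1" using cube_sup_le_1[OF n s] by auto
qed

lemma cube_sup_scale:
  assumes n: "n \<ge> 1" and r: "0 \<le> r" and scaled: "\<And>i. i \<in> {1..n} \<Longrightarrow> 2 * s i - 1 = r * (2 * s' i - 1)"
  shows "cube_sup n s = r * cube_sup n s'"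
proof -
  obtain i0 where i0: "i0 \<in> {1..n}" "\<bar>2 * s i0 - 1\<bar> = cube_sup n s"
    using cube_sup_attained[OF n] by blast
  obtain i1 where i1: "i1 \<in> {1..n}" "\<bar>2 * s' i1 - 1\<bar> = cube_sup n s'"
    using cube_sup_attained[OF n] by blast
  have "cube_sup n s = r * \<bar>2 * s' i0 - 1\<bar>" using i0 scaled[OF i0(1)] r by (simp add: abs_mult)
  also have "\<dots> \<le> r * cube_sup n s'" using cube_sup_ge[OF i0(1), of s'] r by (simp add: mult_left_mono)
  finally have "cube_sup n s \<le> r * cube_sup n s'" .
  moreover have "r * cube_sup n s' = \<bar>2 * s i1 - 1\<bar>" using i1 scaled[OF i1(1)] r by (simp add: abs_mult)
  moreover have "\<dots> \<le> cube_sup n s" using cube_sup_ge[OF i1(1), of s] by simp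
  ultimately show ?thesis by simp
qed

lemma abs_le_cube_norm: "i \<in> {1..n} \<Longrightarrow> \<bar>2 * s i - 1\<bar> \<le> cube_norm n s"
proof -
  assume "i \<in> {1..n}"
  then have "(2 * s i - 1)^2 \<le> (\<Sum>j\<in>{1..n}. (2 * s j - 1)^2)"
    by (intro member_le_sum) auto
  then show ?thesis unfolding cube_norm_def using real_sqrt_le_mono by fastforce
qed

lemma cube_norm_nonneg: "0 \<le> cube_norm n s"
  unfolding cube_norm_def by (auto intro: sum_nonneg)

lemma cube_norm_eq_0_iff: "cube_norm n s = 0 \<longleftrightarrow> (\<forall>i\<in>{1..n}. 2 * s i - 1 = 0)"
  unfolding cube_norm_def by (simp add: sum_nonneg_eq_0_iff)

lemma cube_sphere_on_unit_sphere:
  assumes n: "n \<ge> 1"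
  shows "(cube_sphere n s 0 - 1)^2 + (\<Sum>i\<in>{1..n}. (cube_sphere n s i)^2) = 1"
proof (cases "cube_norm n s = 0")
  case True
  then have "cube_sup n s = 0" using n by (simp add: cube_norm_eq_0_iff cube_sup_eq_0_iff)
  then show ?thesis by (simp add: cube_sphere_def)
next
  case False
  let ?c = "(sin (pi * cube_sup n s))^2 / (cube_norm n s)^2"
  have "(\<Sum>i\<in>{1..n}. (cube_sphere n s i)^2) = (\<Sum>i\<in>{1..n}. ?c * (2 * s i - 1)^2)"
    by (rule sum.cong) (auto simp: cube_sphere_def power_divide power_mult_distrib)
  also have "\<dots> = ?c * (\<Sum>i\<in>{1..n}. (2 * s i - 1)^2)"
    by (simp add: sum_distrib_left)
  also have "(\<Sum>i\<in>{1..n}. (2 * s i - 1)^2) = (cube_norm n s)^2"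
    unfolding cube_norm_def by (simp add: sum_nonneg)
  finally show ?thesis using False by (simp add: cube_sphere_def sin_squared_eq)
qed

lemma hbase_iff: "p = hbase \<longleftrightarrow> (\<forall>i. p i = 0)"
  by (auto simp: hbase_def)

lemma cube_sphere_eq_hbase_iff:
  assumes n: "n \<ge> 1" and s: "s \<in> hcube n"
  shows "cube_sphere n s = hbase \<longleftrightarrow> cube_boundary n s"
proof
  assume "cube_sphere n s = hbase"
  then have "cube_sphere n s 0 = 0" by (simp add: hbase_def)
  then have "cos (pi * cube_sup n s) = cos pi" by (simp add: cube_sphere_def)
  then have "pi * cube_sup n s = pi"
    using cos_inj_pi[of "pi * cube_sup n s" pi] cube_sup_nonneg[OF n, of s] cube_sup_le_1[OF n s]
    by auto
  then show "cube_boundary n s" using cube_sup_eq_1_iff[OF n s] by simp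
next
  assume "cube_boundary n s"
  then have "cube_sup n s = 1" using cube_sup_eq_1_iff[OF n s] by simp
  then show "cube_sphere n s = hbase" by (auto simp: cube_sphere_def hbase_def fun_eq_iff)
qed

text \<open>Off the boundary, \<open>cube_sup\<close> is recovered from the first coordinate of the image and the
  direction of \<open>2 s - 1\<close> from the others; the scale is then pinned down by \<open>cube_sup\<close>.\<close>

lemma cube_sphere_inj:
  assumes n: "n \<ge> 1" and s: "s \<in> hcube n" and s': "s' \<in> hcube n"
    and interior: "\<not> cube_boundary n s" and eq: "cube_sphere n s = cube_sphere n s'"
  shows "s = s'"
proof -
  have "cos (pi * cube_sup n s) = cos (pi * cube_sup n s')"
    using fun_cong[OF eq, of 0] by (simp add: cube_sphere_def)
  then have "pi * cube_sup n s = pi * cube_sup n s'"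
    using cos_inj_pi[of "pi * cube_sup n s" "pi * cube_sup n s'"] cube_sup_nonneg[OF n, of s]
      cube_sup_nonneg[OF n, of s'] cube_sup_le_1[OF n s] cube_sup_le_1[OF n s'] by auto
  then have sup_eq: "cube_sup n s = cube_sup n s'" by simp
  have coord_eq: "2 * s i - 1 = 2 * s' i - 1" if i: "i \<in> {1..n}" for i
  proof (cases "cube_sup n s = 0")
    case True
    then show ?thesis
      using cube_sup_eq_0_iff[OF n, of s, THEN iffD1] cube_sup_eq_0_iff[OF n, of s', THEN iffD1] sup_eq i
      by simp
  next
    case False
    let ?m = "cube_sup n s"
    have "0 < ?m" "?m < 1"
      using False cube_sup_nonneg[OF n, of s] cube_sup_le_1[OF n s] cube_sup_eq_1_iff[OF n s] interior
      by auto
    then have sin_pos: "0 < sin (pi * ?m)" by (intro sin_gt_zero) auto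
    have "cube_norm n s \<noteq> 0" "cube_norm n s' \<noteq> 0"
      using False sup_eq cube_sup_eq_0_iff[OF n, of s] cube_sup_eq_0_iff[OF n, of s']
        cube_norm_eq_0_iff[of n s] cube_norm_eq_0_iff[of n s'] by auto
    then have norm_pos: "0 < cube_norm n s" "0 < cube_norm n s'"
      using cube_norm_nonneg[of n s] cube_norm_nonneg[of n s'] by auto
    define r where "r = cube_norm n s / cube_norm n s'"
    have r_pos: "0 < r" using norm_pos by (simp add: r_def)
    have scaled: "2 * s j - 1 = r * (2 * s' j - 1)" if j: "j \<in> {1..n}" for j
    proof -
      have "sin (pi * ?m) * (2 * s j - 1) / cube_norm n s
          = sin (pi * ?m) * (2 * s' j - 1) / cube_norm n s'"
        using fun_cong[OF eq, of j] j sup_eq by (simp add: cube_sphere_def)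
      then have "sin (pi * ?m) * ((2 * s j - 1) / cube_norm n s)
          = sin (pi * ?m) * ((2 * s' j - 1) / cube_norm n s')"
        by (simp only: times_divide_eq_right)
      moreover have "sin (pi * ?m) \<noteq> 0" using sin_pos by simp
      ultimately have "(2 * s j - 1) / cube_norm n s = (2 * s' j - 1) / cube_norm n s'"
        using mult_left_cancel by blast
      then show ?thesis using norm_pos by (simp add: r_def field_simps)
    qed
    have "?m = r * cube_sup n s'" using cube_sup_scale[OF n _ scaled] r_pos by simp
    then have "r = 1" using sup_eq \<open>0 < ?m\<close> by simp
    then show ?thesis using scaled[OF i] by simp
  qed
  show ?thesis
  proof
    fix i show "s i = s' i"
      using coord_eq hcube_outside[OF s] hcube_outside[OF s'] by (cases "i \<in> {1..n}") auto
  qed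
qed

lemma cube_point_in_direction:
  assumes n: "n \<ge> 1" and m: "0 \<le> m" "m \<le> 1" and w: "\<exists>i\<in>{1..n}. w i \<noteq> 0"
  obtains s c where "s \<in> hcube n" "cube_sup n s = m" "0 < c"
    "\<And>i. i \<in> {1..n} \<Longrightarrow> 2 * s i - 1 = m * c * w i"
proof -
  define M where "M = Max ((\<lambda>i. \<bar>w i\<bar>) ` {1..n})"
  have M_ge: "\<bar>w i\<bar> \<le> M" if "i \<in> {1..n}" for i unfolding M_def using that by (intro Max_ge) auto
  have "M \<in> (\<lambda>i. \<bar>w i\<bar>) ` {1..n}" unfolding M_def using n by (intro Max_in) auto
  then obtain i0 where i0: "i0 \<in> {1..n}" "\<bar>w i0\<bar> = M" by auto
  have M_pos: "0 < M" using w M_ge by force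
  define s where "s i = (if i \<in> {1..n} then (m * w i / M + 1) / 2 else 0)" for i
  have centred: "2 * s i - 1 = m * (1 / M) * w i" if "i \<in> {1..n}" for i
    using that by (simp add: s_def field_simps)
  have centred_le: "\<bar>2 * s i - 1\<bar> \<le> m" if "i \<in> {1..n}" for i
  proof -
    have "m * (1 / M) * \<bar>w i\<bar> \<le> m * (1 / M) * M" using M_ge[OF that] m M_pos by (intro mult_left_mono) auto
    then show ?thesis using centred[OF that] m M_pos by (simp add: abs_mult)
  qed
  have "0 \<le> s i \<and> s i \<le> 1" if "i \<in> {1..n}" for i
    using centred_le[OF that] m by (auto simp: abs_le_iff)
  then have "s \<in> hcube n" unfolding hcube_def by (auto simp: s_def)
  moreover have "cube_sup n s = m"
    using cube_sup_attained[OF n, of s] centred_le cube_sup_ge[OF i0(1), of s] centred[OF i0(1)] i0(2)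
      m M_pos by (force simp: abs_mult)
  ultimately show thesis using centred M_pos by (intro that[of s "1 / M"]) auto
qed

text \<open>The angle \<open>arccos (p 0 - 1)\<close> fixes \<open>cube_sup\<close>, and \<open>(p 1, ..., p n)\<close> fixes the direction of
  \<open>2 s - 1\<close> (any direction will do when it vanishes).\<close>

lemma cube_sphere_surj:
  assumes n: "n \<ge> 1" and high: "\<forall>i>n. p i = 0"
    and sphere: "(p 0 - 1)^2 + (\<Sum>i\<in>{1..n}. (p i)^2) = 1"
  shows "\<exists>s\<in>hcube n. cube_sphere n s = p"
proof -
  define S where "S = (\<Sum>i\<in>{1..n}. (p i)^2)"
  have S_nonneg: "0 \<le> S" unfolding S_def by (auto intro: sum_nonneg)
  define th where "th = arccos (p 0 - 1)"
  have "\<bar>p 0 - 1\<bar> \<le> 1" using sphere S_nonneg abs_square_le_1[of "p 0 - 1"] by (simp add: S_def)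
  then have th: "0 \<le> th" "th \<le> pi" "cos th = p 0 - 1"
    by (auto simp: th_def arccos_lbound arccos_ubound cos_arccos abs_le_iff)
  have "(sin th)^2 = S" using sphere th(3) by (simp add: sin_squared_eq S_def)
  then have sin_th: "sin th = sqrt S" using sin_ge_zero[OF th(1,2)] by (metis real_sqrt_abs abs_of_nonneg)
  define w where "w i = (if S = 0 then 1 else p i)" for i
  have w_nonzero: "\<exists>i\<in>{1..n}. w i \<noteq> 0"
  proof (cases "S = 0")
    case False
    then obtain i where "i \<in> {1..n}" "(p i)^2 \<noteq> 0" unfolding S_def by (meson sum.neutral)
    then show ?thesis using False by (auto simp: w_def)
  qed (use n in \<open>auto simp: w_def\<close>)
  have "0 \<le> th / pi" "th / pi \<le> 1" using th by auto
  then obtain s c where s: "s \<in> hcube n" "cube_sup n s = th / pi" "0 < c"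
    and centred: "\<And>i. i \<in> {1..n} \<Longrightarrow> 2 * s i - 1 = th / pi * c * w i"
    using cube_point_in_direction[OF n _ _ w_nonzero] by blast
  have angle: "pi * cube_sup n s = th" using s(2) by simp
  have coords: "cube_sphere n s i = p i" if i: "i \<in> {1..n}" for i
  proof (cases "S = 0")
    case True
    then show ?thesis using i sin_th angle by (simp add: cube_sphere_def S_def sum_nonneg_eq_0_iff)
  next
    case False
    then have "0 < th" "th < pi" using sin_th S_nonneg th(1,2) by (auto simp: less_eq_real_def)
    then have pos: "0 < th * c" "0 < th / pi * c" using s(3) by simp_all
    have "(\<Sum>i\<in>{1..n}. (2 * s i - 1)^2) = (\<Sum>i\<in>{1..n}. (th / pi * c)^2 * (p i)^2)"
      using False by (intro sum.cong refl) (simp add: centred w_def power_mult_distrib power_divide)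
    also have "\<dots> = (th / pi * c)^2 * S" by (simp add: S_def sum_distrib_left)
    finally have "cube_norm n s = th / pi * c * sqrt S"
      unfolding cube_norm_def using pos by (simp add: real_sqrt_mult)
    then show ?thesis using i centred[OF i] angle sin_th pos False S_nonneg s(3) \<open>0 < th\<close>
      by (simp add: cube_sphere_def w_def)
  qed
  have "cube_sphere n s i = p i" for i
  proof -
    consider "i = 0" | "i \<in> {1..n}" | "i > n" by fastforce
    then show ?thesis
    proof cases
      case 1 then show ?thesis using angle th(3) by (simp add: cube_sphere_def)
    next
      case 2 then show ?thesis by (rule coords)
    next
      case 3 then show ?thesis using high by (simp add: cube_sphere_def)
    qed
  qed
  then show ?thesis using s(1) by blast
qed

lemma continuous_on_cube_sup: "continuous_on UNIV (cube_sup n)"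
proof (cases "n = 0")
  case False
  then show ?thesis unfolding cube_sup_def
    by (intro continuous_on_Max continuous_on_rabs continuous_on_diff continuous_on_mult
        continuous_on_const continuous_on_coordinate) auto
qed (simp add: cube_sup_def)

lemma continuous_on_cube_norm: "continuous_on UNIV (cube_norm n)"
  unfolding cube_norm_def
  by (intro continuous_on_sum continuous_on_power continuous_on_real_sqrt continuous_on_diff
      continuous_on_mult continuous_on_const continuous_on_coordinate)

text \<open>At the centre of the cube the quotient is squeezed by \<open>\<bar>sin (pi * cube_sup n s)\<bar>\<close>,
  which tends to 0 there.\<close>

lemma isCont_cube_sphere_coordinate:
  assumes n: "n \<ge> 1" and i: "i \<in> {1..n}"
  shows "isCont (\<lambda>s. sin (pi * cube_sup n s) * (2 * s i - 1) / cube_norm n s) x"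
proof -
  have sup: "isCont (cube_sup n) x" and norm: "isCont (cube_norm n) x"
    and coord: "isCont (\<lambda>s::nat\<Rightarrow>real. s i) x"
    by (auto intro: continuous_on_interior continuous_on_cube_sup continuous_on_cube_norm
        continuous_on_product_coordinates)
  show ?thesis
  proof (cases "cube_norm n x = 0")
    case False
    then show ?thesis using sup norm coord unfolding isCont_def
      by (intro tendsto_divide tendsto_mult tendsto_sin tendsto_diff tendsto_const) auto
  next
    case True
    then have "cube_sup n x = 0" using cube_sup_eq_0_iff[OF n] cube_norm_eq_0_iff by simp
    let ?g = "\<lambda>s. sin (pi * cube_sup n s) * (2 * s i - 1) / cube_norm n s"
    have bound: "norm (?g s) \<le> \<bar>sin (pi * cube_sup n s)\<bar>" for s
    proof -
      have "\<bar>2 * s i - 1\<bar> / cube_norm n s \<le> 1"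
        using abs_le_cube_norm[OF i, of s] cube_norm_nonneg[of n s]
        by (cases "cube_norm n s = 0") (auto simp: divide_le_eq_1)
      then have "\<bar>sin (pi * cube_sup n s)\<bar> * (\<bar>2 * s i - 1\<bar> / cube_norm n s) \<le> \<bar>sin (pi * cube_sup n s)\<bar>"
        by (intro mult_left_le) auto
      then show ?thesis using cube_norm_nonneg[of n s] by (simp add: abs_mult abs_divide)
    qed
    have "((\<lambda>s. \<bar>sin (pi * cube_sup n s)\<bar>) \<longlongrightarrow> \<bar>sin (pi * cube_sup n x)\<bar>) (at x)"
      by (intro tendsto_rabs tendsto_sin tendsto_mult tendsto_const
          isCont_tendsto_compose[OF sup] tendsto_ident_at)
    then have lim0: "((\<lambda>s. \<bar>sin (pi * cube_sup n s)\<bar>) \<longlongrightarrow> 0) (at x)"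
      using \<open>cube_sup n x = 0\<close> by simp
    have "(?g \<longlongrightarrow> 0) (at x)"
      by (rule Lim_null_comparison[OF _ lim0]) (intro always_eventually allI bound)
    then show ?thesis unfolding isCont_def using True by simp
  qed
qed

lemma continuous_on_cube_sphere: "n \<ge> 1 \<Longrightarrow> continuous_on UNIV (cube_sphere n)"
proof (intro continuous_on_coordinatewise_then_product)
  fix i
  assume n: "n \<ge> 1"
  consider "i = 0" | "i \<in> {1..n}" | "i > n" by fastforce
  then show "continuous_on UNIV (\<lambda>s. cube_sphere n s i)"
  proof cases
    case 1
    then show ?thesis unfolding cube_sphere_def
      by (simp, intro continuous_on_add continuous_on_cos continuous_on_mult continuous_on_const
          continuous_on_cube_sup)
  next
    case 2
    then show ?thesis using isCont_cube_sphere_coordinate[OF n 2] unfolding cube_sphere_def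
      by (simp add: continuous_at_imp_continuous_on)
  next
    case 3
    then show ?thesis unfolding cube_sphere_def by simp
  qed
qed

subsection \<open>The Hawaiian earring as a quotient of radii times the cube\<close>

definition radii :: "real set" where
  "radii = insert 0 ((\<lambda>k. 1 / real (Suc k)) ` UNIV)"

lemma compact_radii: "compact radii"
proof -
  have "(\<lambda>k. 1 / real (Suc k)) \<longlonglongrightarrow> 0"
    using LIMSEQ_inverse_real_of_nat by (simp add: inverse_eq_divide)
  then show ?thesis unfolding radii_def by (rule compact_sequence_with_limit)
qed

lemma radiiE:
  assumes "t \<in> radii"
  obtains "t = 0" | k where "k \<ge> 1" "t = 1 / real k"
proof -
  from assms consider "t = 0" | k where "t = 1 / real (Suc k)" unfolding radii_def by auto
  then show thesis
  proof cases
    case (2 k)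
    then show thesis using that(2)[of "Suc k"] by simp
  qed (use that(1) in blast)
qed

lemma inverse_in_radii: "k \<ge> 1 \<Longrightarrow> 1 / real k \<in> radii"
  unfolding radii_def by (cases k) auto

definition param_dom :: "nat \<Rightarrow> (real \<times> (nat \<Rightarrow> real)) set" where
  "param_dom n = radii \<times> hcube n"

definition hparam :: "nat \<Rightarrow> real \<times> (nat \<Rightarrow> real) \<Rightarrow> (nat \<Rightarrow> real)" where
  "hparam n z = (\<lambda>i. fst z * cube_sphere n (snd z) i)"

definition param_boundary :: "nat \<Rightarrow> real \<times> (nat \<Rightarrow> real) \<Rightarrow> bool" where
  "param_boundary n z \<longleftrightarrow> fst z = 0 \<or> cube_boundary n (snd z)"

lemma hquot_eq_hparam: "hquot n k s = hparam n (1 / real k, s)"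
  by (simp add: hquot_eq_cube_sphere hparam_def)

lemma hparam_radius_0: "hparam n (0, s) = hbase"
  by (simp add: hparam_def hbase_def)

lemma continuous_on_hparam: "n \<ge> 1 \<Longrightarrow> continuous_on UNIV (hparam n)"
  unfolding hparam_def
  by (intro continuous_on_coordinatewise_then_product continuous_on_mult continuous_on_fst
      continuous_on_compose2[OF continuous_on_product_then_coordinatewise[OF continuous_on_cube_sphere]]
      continuous_on_snd continuous_on_id) auto

lemma hsphere_norm_eq:
  assumes "p \<in> hsphere n k"
  shows "(p 0)^2 + (\<Sum>i\<in>{1..n}. (p i)^2) = 2 * p 0 / real k"
proof -
  have "(p 0 - 1 / real k)^2 + (\<Sum>i\<in>{1..n}. (p i)^2) = (1 / real k)^2"
    using assms unfolding hsphere_def by simp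
  then show ?thesis unfolding power2_diff by (simp add: algebra_simps)
qed

lemma hsphere_unique:
  assumes "p \<in> hsphere n k" "p \<in> hsphere n k'" "k \<ge> 1" "k' \<ge> 1" "p \<noteq> hbase"
  shows "k = k'"
proof (cases "p 0 = 0")
  case True
  have "(p 0)^2 + (\<Sum>i\<in>{1..n}. (p i)^2) = 0" using hsphere_norm_eq[OF assms(1)] True by simp
  then have "\<forall>i\<in>{1..n}. p i = 0"
    using True by (simp add: sum_nonneg_eq_0_iff)
  moreover have "\<forall>i>n. p i = 0" using assms(1) unfolding hsphere_def by blast
  ultimately have "p i = 0" for i
    using True by (cases "i = 0"; cases "i \<le> n") auto
  then have "p = hbase" by (simp add: hbase_iff)
  then show ?thesis using assms(5) by simp
next
  case False
  have "2 * p 0 / real k = 2 * p 0 / real k'"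
    using hsphere_norm_eq[OF assms(1)] hsphere_norm_eq[OF assms(2)] by linarith
  then show ?thesis using False assms(3,4) by (simp add: field_simps)
qed

lemma hparam_in_hsphere:
  assumes n: "n \<ge> 1" and k: "k \<ge> 1"
  shows "hparam n (1 / real k, s) \<in> hsphere n k"
proof -
  let ?c = "1 / real k" and ?q = "cube_sphere n s"
  have "(?c * ?q 0 - ?c)^2 + (\<Sum>i\<in>{1..n}. (?c * ?q i)^2)
      = ?c^2 * ((?q 0 - 1)^2 + (\<Sum>i\<in>{1..n}. (?q i)^2))"
  proof -
    have "?c * ?q 0 - ?c = ?c * (?q 0 - 1)" by (simp add: right_diff_distrib)
    then show ?thesis by (simp only: power_mult_distrib sum_distrib_left distrib_left)
  qed
  also have "\<dots> = ?c^2" using cube_sphere_on_unit_sphere[OF n] by simp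
  finally have "(?c * ?q 0 - ?c)^2 + (\<Sum>i\<in>{1..n}. (?c * ?q i)^2) = ?c^2" .
  moreover have "\<forall>i>n. ?q i = 0" by (simp add: cube_sphere_def)
  ultimately show ?thesis unfolding hsphere_def hparam_def by auto
qed

lemma hparam_image: assumes n: "n \<ge> 1" shows "hparam n ` param_dom n = hawaiian n"
proof
  show "hparam n ` param_dom n \<subseteq> hawaiian n"
  proof
    fix p assume "p \<in> hparam n ` param_dom n"
    then obtain t s where ts: "t \<in> radii" "s \<in> hcube n" "p = hparam n (t, s)"
      by (auto simp: param_dom_def)
    from ts(1) show "p \<in> hawaiian n"
    proof (cases rule: radiiE)
      case 1 then show ?thesis using ts hbase_in_hawaiian hparam_radius_0 by simp
    next
      case (2 k)
      then show ?thesis using ts hparam_in_hsphere[OF n] unfolding hawaiian_def by auto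
    qed
  qed
next
  show "hawaiian n \<subseteq> hparam n ` param_dom n"
  proof
    fix p assume "p \<in> hawaiian n"
    then obtain k where k: "k \<ge> 1" "p \<in> hsphere n k" unfolding hawaiian_def by auto
    define q where "q = (\<lambda>i. real k * p i)"
    have k_pos: "0 < real k" using k by simp
    have "(q 0 - 1)^2 + (\<Sum>i\<in>{1..n}. (q i)^2)
        = (real k)^2 * ((p 0 - 1 / real k)^2 + (\<Sum>i\<in>{1..n}. (p i)^2))"
      using k_pos by (simp add: q_def power_mult_distrib sum_distrib_left power2_eq_square field_simps)
    also have "\<dots> = 1" using k(2) k_pos unfolding hsphere_def by (simp add: power_divide)
    finally have q_sphere: "(q 0 - 1)^2 + (\<Sum>i\<in>{1..n}. (q i)^2) = 1" .
    have "\<forall>i>n. q i = 0" using k(2) by (simp add: q_def hsphere_def)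
    then obtain s where s: "s \<in> hcube n" "cube_sphere n s = q"
      using cube_sphere_surj[OF n _ q_sphere] by blast
    have "hparam n (1 / real k, s) = p" using s k_pos by (simp add: hparam_def q_def fun_eq_iff)
    moreover have "(1 / real k, s) \<in> param_dom n" using inverse_in_radii[OF k(1)] s(1)
      by (simp add: param_dom_def)
    ultimately show "p \<in> hparam n ` param_dom n" by (metis image_eqI)
  qed
qed

lemma hparam_eq_hbase_iff:
  assumes n: "n \<ge> 1" and z: "z \<in> param_dom n"
  shows "hparam n z = hbase \<longleftrightarrow> param_boundary n z"
proof -
  obtain t s where ts: "z = (t, s)" "t \<in> radii" "s \<in> hcube n" using z by (auto simp: param_dom_def)
  show ?thesis
  proof (cases "t = 0")
    case False
    then have "hparam n z = hbase \<longleftrightarrow> cube_sphere n s = hbase"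
      using ts by (auto simp: hparam_def hbase_def fun_eq_iff)
    then show ?thesis using cube_sphere_eq_hbase_iff[OF n ts(3)] False ts by (simp add: param_boundary_def)
  qed (use ts in \<open>simp add: hparam_radius_0 param_boundary_def\<close>)
qed

lemma hparam_inj:
  assumes n: "n \<ge> 1" and z: "z \<in> param_dom n" and z': "z' \<in> param_dom n"
    and eq: "hparam n z = hparam n z'" and interior: "\<not> param_boundary n z"
  shows "z = z'"
proof -
  obtain t s where ts: "z = (t, s)" "t \<in> radii" "s \<in> hcube n" using z by (auto simp: param_dom_def)
  obtain t' s' where ts': "z' = (t', s')" "t' \<in> radii" "s' \<in> hcube n"
    using z' by (auto simp: param_dom_def)
  have interior': "\<not> param_boundary n z'"
    using hparam_eq_hbase_iff[OF n z] hparam_eq_hbase_iff[OF n z'] eq interior by simp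
  obtain k where k: "k \<ge> 1" "t = 1 / real k"
    using ts(2) interior ts(1) by (cases rule: radiiE) (auto simp: param_boundary_def)
  obtain k' where k': "k' \<ge> 1" "t' = 1 / real k'"
    using ts'(2) interior' ts'(1) by (cases rule: radiiE) (auto simp: param_boundary_def)
  have "hparam n z \<noteq> hbase" using hparam_eq_hbase_iff[OF n z] interior by simp
  then have "k = k'"
    using hsphere_unique hparam_in_hsphere[OF n k(1), of s] hparam_in_hsphere[OF n k'(1), of s']
      ts ts' k k' eq by metis
  then have t_eq: "t = t'" using k k' by simp
  have "cube_sphere n s = cube_sphere n s'"
    using eq ts ts' t_eq k by (auto simp: hparam_def fun_eq_iff)
  then have "s = s'"
    using cube_sphere_inj[OF n ts(3) ts'(3)] interior ts by (simp add: param_boundary_def)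
  then show ?thesis using t_eq ts ts' by simp
qed

lemma hindex_hparam:
  assumes n: "n \<ge> 1" and k: "k \<ge> 1" and nonbase: "hparam n (1 / real k, s) \<noteq> hbase"
  shows "hindex n (hparam n (1 / real k, s)) = k"
  unfolding hindex_def
  using hsphere_unique[OF _ hparam_in_hsphere[OF n k] _ k nonbase] hparam_in_hsphere[OF n k] k
  by (intro the_equality) auto

definition hparam_inv :: "nat \<Rightarrow> (nat \<Rightarrow> real) \<Rightarrow> real \<times> (nat \<Rightarrow> real)" where
  "hparam_inv n p = (SOME z. z \<in> param_dom n \<and> hparam n z = p)"

lemma hparam_inv_hparam:
  assumes n: "n \<ge> 1" and z: "z \<in> param_dom n"
  shows "hparam_inv n (hparam n z) \<in> param_dom n"
    and "param_boundary n z \<Longrightarrow> param_boundary n (hparam_inv n (hparam n z))"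
    and "\<not> param_boundary n z \<Longrightarrow> hparam_inv n (hparam n z) = z"
proof -
  have "\<exists>z'. z' \<in> param_dom n \<and> hparam n z' = hparam n z" using z by blast
  then have inv: "hparam_inv n (hparam n z) \<in> param_dom n"
    "hparam n (hparam_inv n (hparam n z)) = hparam n z"
    unfolding hparam_inv_def by (metis (mono_tags, lifting) someI_ex)+
  then show "hparam_inv n (hparam n z) \<in> param_dom n" by simp
  show "param_boundary n z \<Longrightarrow> param_boundary n (hparam_inv n (hparam n z))"
    using hparam_eq_hbase_iff[OF n z] hparam_eq_hbase_iff[OF n inv(1)] inv(2) by simp
  show "\<not> param_boundary n z \<Longrightarrow> hparam_inv n (hparam n z) = z"
    using hparam_inj[OF n z inv(1) inv(2)[symmetric]] by simp
qed

text \<open>Time, radius and cube coordinates parametrize \<open>[0,1] \<times> hawaiian n\<close>; as a continuous surjection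
  from a compact space onto a Hausdorff space this is a quotient map.\<close>

definition htpy_param :: "nat \<Rightarrow> (real \<times> real) \<times> (nat \<Rightarrow> real) \<Rightarrow> real \<times> (nat \<Rightarrow> real)" where
  "htpy_param n w = (fst (fst w), hparam n (snd (fst w), snd w))"

lemma quotient_map_htpy_param:
  assumes n: "n \<ge> 1"
  shows "quotient_map (top_of_set (({0..1} \<times> radii) \<times> hcube n))
           (top_of_set ({0..1} \<times> hawaiian n)) (htpy_param n)"
proof (rule continuous_closed_imp_quotient_map)
  let ?D = "({0..1::real} \<times> radii) \<times> hcube n"
  have image: "htpy_param n ` ?D = {0..1} \<times> hawaiian n"
  proof
    show "htpy_param n ` ?D \<subseteq> {0..1} \<times> hawaiian n"
      using hparam_image[OF n] by (auto simp: htpy_param_def param_dom_def)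
    show "{0..1} \<times> hawaiian n \<subseteq> htpy_param n ` ?D"
    proof clarify
      fix tau p assume "tau \<in> {0..1::real}" "p \<in> hawaiian n"
      moreover obtain t s where "(t, s) \<in> param_dom n" "p = hparam n (t, s)"
        using \<open>p \<in> hawaiian n\<close> hparam_image[OF n] by (metis imageE prod.collapse)
      ultimately show "(tau, p) \<in> htpy_param n ` ?D"
        by (intro image_eqI[of _ _ "((tau, t), s)"]) (auto simp: htpy_param_def param_dom_def)
    qed
  qed
  have "continuous_on UNIV (htpy_param n)" unfolding htpy_param_def
    by (intro continuous_on_Pair continuous_on_compose2[OF continuous_on_hparam[OF n]])
      (auto intro!: continuous_on_Pair continuous_on_snd continuous_on_fst continuous_on_id)
  then show cont: "continuous_map (top_of_set ?D) (top_of_set ({0..1} \<times> hawaiian n)) (htpy_param n)"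
    using image by (auto intro: continuous_on_subset)
  show "closed_map (top_of_set ?D) (top_of_set ({0..1} \<times> hawaiian n)) (htpy_param n)"
  proof (rule continuous_imp_closed_map[OF cont])
    show "compact_space (top_of_set ?D)"
      by (simp add: compact_space_subtopology compact_Times compact_radii compact_hcube)
  qed (simp add: Hausdorff_space_subtopology)
  show "htpy_param n ` topspace (top_of_set ?D) = topspace (top_of_set ({0..1} \<times> hawaiian n))"
    using image by simp
qed

lemma htpy_factor_through_hparam:
  fixes H :: "(real \<times> real) \<times> (nat \<Rightarrow> real) \<Rightarrow> 'a"
  assumes n: "n \<ge> 1" and H: "continuous_map (top_of_set (({0..1} \<times> radii) \<times> hcube n)) X H"
    and H_boundary: "\<And>tau t s. tau \<in> {0..1} \<Longrightarrow> (t, s) \<in> param_dom n \<Longrightarrow> param_boundary n (t, s)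
      \<Longrightarrow> H ((tau, t), s) = x0"
  obtains h where "continuous_map (top_of_set ({0..1} \<times> hawaiian n)) X h"
    "\<And>tau t s. tau \<in> {0..1} \<Longrightarrow> (t, s) \<in> param_dom n \<Longrightarrow> h (tau, hparam n (t, s)) = H ((tau, t), s)"
proof -
  define h where "h y = H ((fst y, fst (hparam_inv n (snd y))), snd (hparam_inv n (snd y)))" for y
  have h_eq: "h (tau, hparam n (t, s)) = H ((tau, t), s)"
    if tau: "tau \<in> {0..1}" and z: "(t, s) \<in> param_dom n" for tau t s
  proof (cases "param_boundary n (t, s)")
    case True
    then show ?thesis
      using hparam_inv_hparam[OF n z] H_boundary[OF tau] H_boundary[OF tau z]
      by (simp add: h_def split_beta)
  qed (simp add: h_def hparam_inv_hparam[OF n z])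
  have "continuous_map (top_of_set (({0..1} \<times> radii) \<times> hcube n)) X (h \<circ> htpy_param n)"
    by (rule continuous_map_eq[OF H]) (auto simp: htpy_param_def h_eq param_dom_def)
  then have "continuous_map (top_of_set ({0..1} \<times> hawaiian n)) X h"
    by (rule continuous_compose_quotient_map[OF quotient_map_htpy_param[OF n]])
  then show ?thesis using h_eq that by blast
qed

subsection \<open>Families of cube maps\<close>

text \<open>With \<open>W = radii\<close> and \<open>B t \<longleftrightarrow> t = 0\<close> these describe based maps on the Hawaiian earring; with
  \<open>W = [0,1] \<times> radii\<close> and \<open>B\<close> testing the radius, based homotopies of such maps.\<close>

definition based_family :: "nat \<Rightarrow> 'w::topological_space set \<Rightarrow> ('w \<Rightarrow> bool) \<Rightarrow> 'a topology \<Rightarrow> 'a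
    \<Rightarrow> ('w \<times> (nat \<Rightarrow> real) \<Rightarrow> 'a) \<Rightarrow> bool" where
  "based_family n W B X x0 F \<longleftrightarrow> continuous_map (top_of_set (W \<times> hcube n)) X F \<and>
     (\<forall>w\<in>W. \<forall>s\<in>hcube n. B w \<or> cube_boundary n s \<longrightarrow> F (w, s) = x0)"

abbreviation based_param_map :: "nat \<Rightarrow> 'a topology \<Rightarrow> 'a \<Rightarrow> (real \<times> (nat \<Rightarrow> real) \<Rightarrow> 'a) \<Rightarrow> bool"
  where "based_param_map n X x0 F \<equiv> based_family n radii (\<lambda>t. t = 0) X x0 F"

abbreviation based_param_htpy ::
  "nat \<Rightarrow> 'a topology \<Rightarrow> 'a \<Rightarrow> ((real \<times> real) \<times> (nat \<Rightarrow> real) \<Rightarrow> 'a) \<Rightarrow> bool"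
  where "based_param_htpy n X x0 H \<equiv> based_family n ({0..1} \<times> radii) (\<lambda>w. snd w = 0) X x0 H"

lemma based_familyD:
  assumes "based_family n W B X x0 F"
  shows "continuous_map (top_of_set (W \<times> hcube n)) X F"
    and "w \<in> W \<Longrightarrow> s \<in> hcube n \<Longrightarrow> B w \<or> cube_boundary n s \<Longrightarrow> F (w, s) = x0"
  using assms by (auto simp: based_family_def)

lemma based_family_compose:
  assumes F: "based_family n W B X x0 F"
    and r: "continuous_map (top_of_set (V \<times> hcube n)) (top_of_set (W \<times> hcube n)) r"
    and r_boundary: "\<And>v s. v \<in> V \<Longrightarrow> s \<in> hcube n \<Longrightarrow> C v \<or> cube_boundary n s
      \<Longrightarrow> B (fst (r (v, s))) \<or> cube_boundary n (snd (r (v, s)))"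
  shows "based_family n V C X x0 (F \<circ> r)"
proof -
  have "r (v, s) \<in> W \<times> hcube n" if "v \<in> V" "s \<in> hcube n" for v s
    using r that by (auto dest: continuous_map_image_subset_topspace)
  then show ?thesis
    using continuous_map_compose[OF r based_familyD(1)[OF F]] based_familyD(2)[OF F] r_boundary
    unfolding based_family_def by (metis comp_apply mem_Times_iff prod.collapse)
qed

definition cube_join :: "nat \<Rightarrow> ('w \<times> (nat \<Rightarrow> real) \<Rightarrow> 'a) \<Rightarrow> ('w \<times> (nat \<Rightarrow> real) \<Rightarrow> 'a)
    \<Rightarrow> 'w \<times> (nat \<Rightarrow> real) \<Rightarrow> 'a" where
  "cube_join j F G x = (if snd x j \<le> 1/2 then F (fst x, (snd x)(j := 2 * snd x j))
      else G (fst x, (snd x)(j := 2 * snd x j - 1)))"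

lemma cube_join_boundary:
  assumes j: "j \<in> {1..n}" and s: "s \<in> hcube n"
    and F: "\<And>s'. s' \<in> hcube n \<Longrightarrow> B w \<or> cube_boundary n s' \<Longrightarrow> F (w, s') = x0"
    and G: "\<And>s'. s' \<in> hcube n \<Longrightarrow> B w \<or> cube_boundary n s' \<Longrightarrow> G (w, s') = x0"
    and b: "B w \<or> cube_boundary n s"
  shows "cube_join j F G (w, s) = x0"
proof (cases "s j \<le> 1/2")
  case True
  have "s(j := 2 * s j) \<in> hcube n"
    using True hcube_coordinate[OF s j] by (intro hcube_fun_upd[OF s j]) auto
  moreover have "B w \<or> cube_boundary n (s(j := 2 * s j))"
    using b cube_boundary_fun_upd_cases[OF _ j, of s "2 * s j"] cube_boundary_fun_upd[OF j, of 0 s] True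
    by (cases "s j = 0") auto
  ultimately show ?thesis using F True by (simp add: cube_join_def)
next
  case False
  have "s(j := 2 * s j - 1) \<in> hcube n"
    using False hcube_coordinate[OF s j] by (intro hcube_fun_upd[OF s j]) auto
  moreover have "B w \<or> cube_boundary n (s(j := 2 * s j - 1))"
    using b cube_boundary_fun_upd_cases[OF _ j, of s "2 * s j - 1"] cube_boundary_fun_upd[OF j, of 1 s]
      False by (cases "s j = 1") auto
  ultimately show ?thesis using G False by (simp add: cube_join_def)
qed

lemma continuous_on_snd_coordinate: "continuous_on S (\<lambda>x::'w::topological_space \<times> (nat \<Rightarrow> real). snd x j)"
  by (rule continuous_on_compose2[OF continuous_on_product_coordinates[of j]])
    (auto intro: continuous_on_snd continuous_on_id)

lemma based_family_cube_join:
  fixes W :: "'w::topological_space set"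
  assumes j: "j \<in> {1..n}" and F: "based_family n W B X x0 F" and G: "based_family n W B X x0 G"
  shows "based_family n W B X x0 (cube_join j F G)"
proof -
  let ?X = "top_of_set (W \<times> hcube n)"
  define g1 where "g1 x = (fst x, (snd x)(j := 2 * snd x j))" for x :: "'w \<times> (nat \<Rightarrow> real)"
  define g2 where "g2 x = (fst x, (snd x)(j := 2 * snd x j - 1))" for x :: "'w \<times> (nat \<Rightarrow> real)"
  have halves: "subtopology ?X {x \<in> topspace ?X. snd x j \<le> 1/2} = top_of_set {x \<in> W \<times> hcube n. snd x j \<le> 1/2}"
    "subtopology ?X {x \<in> topspace ?X. 1/2 \<le> snd x j} = top_of_set {x \<in> W \<times> hcube n. 1/2 \<le> snd x j}"
    by (simp_all add: subtopology_subtopology Int_def)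
  have g1: "continuous_map (top_of_set {x \<in> W \<times> hcube n. snd x j \<le> 1/2}) ?X g1"
    unfolding g1_def
    using hcube_coordinate[OF _ j] hcube_fun_upd[OF _ j]
    by (auto intro!: continuous_on_Pair continuous_on_fst continuous_on_id continuous_on_fun_upd
        continuous_on_snd continuous_on_mult continuous_on_const continuous_on_snd_coordinate)
  have g2: "continuous_map (top_of_set {x \<in> W \<times> hcube n. 1/2 \<le> snd x j}) ?X g2"
    unfolding g2_def
    using hcube_coordinate[OF _ j] hcube_fun_upd[OF _ j]
    by (auto intro!: continuous_on_Pair continuous_on_fst continuous_on_id continuous_on_fun_upd
        continuous_on_snd continuous_on_diff continuous_on_mult continuous_on_const
        continuous_on_snd_coordinate)
  have "continuous_map ?X X (\<lambda>x. if snd x j \<le> 1/2 then (F \<circ> g1) x else (G \<circ> g2) x)"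
  proof (intro continuous_map_cases_le, unfold halves)
    show "continuous_map (top_of_set {x \<in> W \<times> hcube n. snd x j \<le> 1/2}) X (F \<circ> g1)"
      using continuous_map_compose[OF g1 based_familyD(1)[OF F]] .
    show "continuous_map (top_of_set {x \<in> W \<times> hcube n. 1/2 \<le> snd x j}) X (G \<circ> g2)"
      using continuous_map_compose[OF g2 based_familyD(1)[OF G]] .
  next
    fix x assume x: "x \<in> topspace ?X" "snd x j = 1/2"
    then obtain w s where ws: "x = (w, s)" "w \<in> W" "s \<in> hcube n" by auto
    have "F (w, s(j := 1)) = x0" "G (w, s(j := 0)) = x0"
      using ws based_familyD(2)[OF F] based_familyD(2)[OF G] hcube_fun_upd[OF ws(3) j]
        cube_boundary_fun_upd[OF j] by auto
    moreover have "2 * s j = 1" "2 * s j - 1 = 0" using x ws by auto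
    ultimately show "(F \<circ> g1) x = (G \<circ> g2) x" using ws by (simp add: g1_def g2_def)
  qed (auto intro: continuous_on_snd_coordinate)
  moreover have "cube_join j F G = (\<lambda>x. if snd x j \<le> 1/2 then (F \<circ> g1) x else (G \<circ> g2) x)"
    by (simp add: fun_eq_iff cube_join_def g1_def g2_def)
  ultimately have "continuous_map ?X X (cube_join j F G)" by simp
  moreover have "cube_join j F G (w, s) = x0"
    if "w \<in> W" "s \<in> hcube n" "B w \<or> cube_boundary n s" for w s
    using that based_familyD(2)[OF F] based_familyD(2)[OF G] by (intro cube_join_boundary[OF j]) auto
  ultimately show ?thesis by (simp add: based_family_def)
qed

lemma cube_join_interchange:
  "i \<noteq> j \<Longrightarrow> cube_join i (cube_join j A B) (cube_join j C D) z = cube_join j (cube_join i A C) (cube_join i B D) z"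
  by (simp add: cube_join_def fun_upd_twist)

lemma cube_join_cong:
  assumes j: "j \<in> {1..n}" and z: "z \<in> param_dom n"
    and F: "\<And>z'. z' \<in> param_dom n \<Longrightarrow> F z' = F' z'" and G: "\<And>z'. z' \<in> param_dom n \<Longrightarrow> G z' = G' z'"
  shows "cube_join j F G z = cube_join j F' G' z"
proof -
  obtain t s where ts: "z = (t, s)" "t \<in> radii" "s \<in> hcube n" using z by (auto simp: param_dom_def)
  have "(t, s(j := 2 * s j)) \<in> param_dom n" if "s j \<le> 1/2"
    using that ts hcube_coordinate[OF ts(3) j] hcube_fun_upd[OF ts(3) j] by (auto simp: param_dom_def)
  moreover have "(t, s(j := 2 * s j - 1)) \<in> param_dom n" if "\<not> s j \<le> 1/2"
    using that ts hcube_coordinate[OF ts(3) j] hcube_fun_upd[OF ts(3) j] by (auto simp: param_dom_def)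
  ultimately show ?thesis using F G ts by (simp add: cube_join_def)
qed

definition hmaps :: "nat \<Rightarrow> 'a topology \<Rightarrow> 'a \<Rightarrow> ((nat \<Rightarrow> real) \<Rightarrow> 'a) set" where
  "hmaps n X x0 = {f. continuous_map (hawaiian_top n) X f \<and> f hbase = x0}"

abbreviation hhomotopic :: "nat \<Rightarrow> 'a topology \<Rightarrow> 'a \<Rightarrow> ((nat \<Rightarrow> real) \<Rightarrow> 'a) \<Rightarrow> ((nat \<Rightarrow> real) \<Rightarrow> 'a) \<Rightarrow> bool"
  where "hhomotopic n X x0 f g \<equiv> homotopic_with (\<lambda>h. h hbase = x0) (hawaiian_top n) X f g"

lemma hhomotopic_imp_hmaps: "hhomotopic n X x0 f g \<Longrightarrow> f \<in> hmaps n X x0 \<and> g \<in> hmaps n X x0"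
  unfolding hmaps_def using homotopic_with_imp_continuous_maps homotopic_with_imp_property by blast

lemma hhomotopic_refl: "f \<in> hmaps n X x0 \<Longrightarrow> hhomotopic n X x0 f f"
  by (simp add: hmaps_def)

lemma const_in_hmaps: "x0 \<in> topspace X \<Longrightarrow> (\<lambda>_. x0) \<in> hmaps n X x0"
  by (simp add: hmaps_def)

text \<open>A homotopy may be given on the parameter space: continuity on \<open>[0,1] \<times> hawaiian n\<close> comes from the
  quotient map \<open>htpy_param\<close>, and the prescribed ends fix it at times 0 and 1 everywhere, not only on
  \<open>hawaiian n\<close>.\<close>

lemma hhomotopic_if_param_htpy:
  fixes H :: "(real \<times> real) \<times> (nat \<Rightarrow> real) \<Rightarrow> 'a"
  assumes n: "n \<ge> 1" and H: "based_param_htpy n X x0 H"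
    and f: "\<And>t s. (t, s) \<in> param_dom n \<Longrightarrow> f (hparam n (t, s)) = H ((0, t), s)"
    and g: "\<And>t s. (t, s) \<in> param_dom n \<Longrightarrow> g (hparam n (t, s)) = H ((1, t), s)"
  shows "hhomotopic n X x0 f g"
proof -
  have H_boundary: "H ((tau, t), s) = x0"
    if "tau \<in> {0..1}" "(t, s) \<in> param_dom n" "param_boundary n (t, s)" for tau t s
    using based_familyD(2)[OF H] that by (auto simp: param_dom_def param_boundary_def)
  obtain h where h: "continuous_map (top_of_set ({0..1} \<times> hawaiian n)) X h"
    and h_eq: "\<And>tau t s. tau \<in> {0..1} \<Longrightarrow> (t, s) \<in> param_dom n \<Longrightarrow> h (tau, hparam n (t, s)) = H ((tau, t), s)"
    using htpy_factor_through_hparam[OF n based_familyD(1)[OF H] H_boundary] by blast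
  define h' where "h' y = (if fst y = 0 then f (snd y) else if fst y = 1 then g (snd y) else h y)" for y
  have agree: "h y = h' y" if y: "y \<in> {0..1} \<times> hawaiian n" for y
  proof -
    obtain tau t s where "y = (tau, hparam n (t, s))" "tau \<in> {0..1}" "(t, s) \<in> param_dom n"
      using y hparam_image[OF n] by (metis imageE mem_Times_iff prod.collapse)
    then show ?thesis using h_eq f g by (auto simp: h'_def)
  qed
  have "continuous_map (top_of_set ({0..1} \<times> hawaiian n)) X h'"
    by (rule continuous_map_eq[OF h]) (simp add: agree)
  moreover have "h' (tau, hbase) = x0" if "tau \<in> {0..1}" for tau
  proof -
    have "(0, \<lambda>_. 0) \<in> param_dom n" by (simp add: param_dom_def radii_def hcube_def)
    then have "h (tau, hbase) = x0"
      using h_eq[OF that] H_boundary[OF that] hparam_radius_0 by (metis fst_conv param_boundary_def)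
    then show ?thesis using agree[of "(tau, hbase)"] that hbase_in_hawaiian by simp
  qed
  ultimately show ?thesis unfolding homotopic_with_def hawaiian_top_eq
    by (intro exI[of _ h']) (auto simp: h'_def)
qed

definition hpull :: "nat \<Rightarrow> ((nat \<Rightarrow> real) \<Rightarrow> 'a) \<Rightarrow> real \<times> (nat \<Rightarrow> real) \<Rightarrow> 'a" where
  "hpull n f z = f (hparam n z)"

lemma based_param_map_hpull:
  assumes n: "n \<ge> 1" and f: "f \<in> hmaps n X x0"
  shows "based_param_map n X x0 (hpull n f)"
  unfolding based_family_def
proof (intro conjI ballI impI)
  have "continuous_map (top_of_set (param_dom n)) (top_of_set (hawaiian n)) (hparam n)"
    using continuous_on_hparam[OF n] hparam_image[OF n] by (auto intro: continuous_on_subset)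
  moreover have "continuous_map (top_of_set (hawaiian n)) X f"
    using f by (simp add: hmaps_def hawaiian_top_eq)
  ultimately have "continuous_map (top_of_set (param_dom n)) X (f \<circ> hparam n)"
    by (rule continuous_map_compose)
  then show "continuous_map (top_of_set (radii \<times> hcube n)) X (hpull n f)"
    by (simp add: hpull_def[abs_def] param_dom_def o_def)
next
  fix t s assume "t \<in> radii" "s \<in> hcube n" "t = 0 \<or> cube_boundary n s"
  then show "hpull n f (t, s) = x0"
    using f hparam_eq_hbase_iff[OF n, of "(t, s)"]
    by (simp add: hpull_def hmaps_def param_dom_def param_boundary_def)
qed

lemma based_param_htpy_of_homotopy:
  assumes n: "n \<ge> 1"
    and k: "continuous_map (prod_topology (top_of_set {0..1}) (hawaiian_top n)) X k"
    and k_base: "\<And>tau. tau \<in> {0..1} \<Longrightarrow> k (tau, hbase) = x0"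
  shows "based_param_htpy n X x0 (k \<circ> htpy_param n)"
  unfolding based_family_def
proof (intro conjI ballI impI)
  show "continuous_map (top_of_set (({0..1} \<times> radii) \<times> hcube n)) X (k \<circ> htpy_param n)"
    using continuous_map_compose[OF quotient_imp_continuous_map[OF quotient_map_htpy_param[OF n]]] k
    by (simp add: hawaiian_top_eq)
next
  fix w s assume "w \<in> {0..1::real} \<times> radii" "s \<in> hcube n" "snd w = 0 \<or> cube_boundary n s"
  then show "(k \<circ> htpy_param n) (w, s) = x0"
    using hparam_eq_hbase_iff[OF n, of "(snd w, s)"] k_base
    by (auto simp: htpy_param_def param_dom_def param_boundary_def)
qed

lemma based_param_htpy_const:
  assumes "based_param_map n X x0 F"
  shows "based_param_htpy n X x0 (\<lambda>w. F (snd (fst w), snd w))"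
proof -
  have "continuous_map (top_of_set (({0..1::real} \<times> radii) \<times> hcube n)) (top_of_set (radii \<times> hcube n))
      (\<lambda>w. (snd (fst w), snd w))"
    by (auto intro!: continuous_on_Pair continuous_on_snd continuous_on_fst continuous_on_id)
  from based_family_compose[OF assms this] show ?thesis by (simp add: o_def)
qed

lemma based_param_map_boundary:
  "based_param_map n X x0 F \<Longrightarrow> z \<in> param_dom n \<Longrightarrow> param_boundary n z \<Longrightarrow> F z = x0"
  by (cases z) (auto simp: based_family_def param_dom_def param_boundary_def)

text \<open>The choice made by \<open>hparam_inv\<close> matters only at collapsed points, where based families
  take the value \<open>x0\<close>.\<close>

definition hlift :: "nat \<Rightarrow> (real \<times> (nat \<Rightarrow> real) \<Rightarrow> 'a) \<Rightarrow> (nat \<Rightarrow> real) \<Rightarrow> 'a" where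
  "hlift n F p = F (hparam_inv n p)"

lemma hlift_hparam:
  assumes n: "n \<ge> 1" and F: "based_param_map n X x0 F" and z: "z \<in> param_dom n"
  shows "hlift n F (hparam n z) = F z"
proof (cases "param_boundary n z")
  case True
  then show ?thesis
    using hparam_inv_hparam[OF n z] based_param_map_boundary[OF F] z by (simp add: hlift_def)
qed (simp add: hlift_def hparam_inv_hparam[OF n z])

lemma hhomotopic_if_param_eq:
  assumes n: "n \<ge> 1" and F: "based_param_map n X x0 F"
    and f: "\<And>z. z \<in> param_dom n \<Longrightarrow> f (hparam n z) = F z"
    and g: "\<And>z. z \<in> param_dom n \<Longrightarrow> g (hparam n z) = F z"
  shows "hhomotopic n X x0 f g"
  by (rule hhomotopic_if_param_htpy[OF n based_param_htpy_const[OF F]]) (auto simp: f g)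

lemma hlift_in_hmaps: "n \<ge> 1 \<Longrightarrow> based_param_map n X x0 F \<Longrightarrow> hlift n F \<in> hmaps n X x0"
  using hhomotopic_if_param_eq hlift_hparam hhomotopic_imp_hmaps by metis

lemma hpull_const [simp]: "hpull n (\<lambda>_. c) z = c"
  by (simp add: hpull_def)

lemma hpull_boundary:
  assumes j: "j \<in> {1..n}" and f: "f \<in> hmaps n X x0" and z: "(t, s) \<in> param_dom n"
    and a: "a = 0 \<or> a = 1"
  shows "hpull n f (t, s(j := a)) = x0"
  using based_familyD(2)[OF based_param_map_hpull[OF _ f]] z j a hcube_fun_upd[OF _ j]
    cube_boundary_fun_upd[OF j] by (auto simp: param_dom_def)

lemma based_family_reparam_coordinate:
  fixes \<sigma> :: "'v::topological_space \<Rightarrow> 'w::topological_space" and \<rho> :: "'v \<times> real \<Rightarrow> real"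
  assumes j: "j \<in> {1..n}" and F: "based_family n W B X x0 F"
    and \<sigma>: "continuous_on V \<sigma>" "\<sigma> ` V \<subseteq> W" "\<And>v. v \<in> V \<Longrightarrow> C v \<Longrightarrow> B (\<sigma> v)"
    and \<rho>: "continuous_on (V \<times> {0..1}) \<rho>" "\<rho> ` (V \<times> {0..1}) \<subseteq> {0..1}"
    and \<rho>_ends: "\<And>v u. v \<in> V \<Longrightarrow> u = 0 \<or> u = 1 \<Longrightarrow> \<rho> (v, u) = 0 \<or> \<rho> (v, u) = 1"
  shows "based_family n V C X x0 (\<lambda>x. F (\<sigma> (fst x), (snd x)(j := \<rho> (fst x, snd x j))))"
proof -
  let ?r = "\<lambda>x. (\<sigma> (fst x), (snd x)(j := \<rho> (fst x, snd x j)))"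
  have inner: "(\<lambda>x. (fst x, snd x j)) ` (V \<times> hcube n) \<subseteq> V \<times> {0..1}"
    using hcube_coordinate[OF _ j] by auto
  have "continuous_on (V \<times> hcube n) ?r"
    by (intro continuous_on_Pair continuous_on_fun_upd continuous_on_snd
        continuous_on_compose2[OF \<sigma>(1) continuous_on_fst] continuous_on_compose2[OF \<rho>(1) _ inner]
        continuous_on_fst continuous_on_id continuous_on_snd_coordinate) auto
  moreover have "?r ` (V \<times> hcube n) \<subseteq> W \<times> hcube n"
    using \<sigma>(2) \<rho>(2) hcube_fun_upd[OF _ j] hcube_coordinate[OF _ j] by (fastforce simp: image_subset_iff)
  ultimately have r: "continuous_map (top_of_set (V \<times> hcube n)) (top_of_set (W \<times> hcube n)) ?r"
    by auto
  have "B (fst (?r (v, s))) \<or> cube_boundary n (snd (?r (v, s)))"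
    if v: "v \<in> V" and "s \<in> hcube n" and b: "C v \<or> cube_boundary n s" for v s
  proof (cases "C v")
    case False
    then have "cube_boundary n (s(j := \<rho> (v, s j))) \<or> s j = 0 \<or> s j = 1"
      using b cube_boundary_fun_upd_cases[OF _ j] by blast
    moreover have "cube_boundary n (s(j := \<rho> (v, s j)))" if "s j = 0 \<or> s j = 1"
      using \<rho>_ends[OF v that] by (rule cube_boundary_fun_upd[OF j])
    ultimately show ?thesis by auto
  qed (simp add: \<sigma>(3)[OF v])
  from based_family_compose[OF F r, where C = C, OF this] show ?thesis by (simp add: o_def)
qed

lemma hhomotopic_reparam:
  fixes \<rho> :: "real \<times> real \<Rightarrow> real"
  assumes j: "j \<in> {1..n}" and f: "f \<in> hmaps n X x0"
    and \<rho>: "continuous_on ({0..1} \<times> {0..1}) \<rho>" "\<rho> ` ({0..1} \<times> {0..1}) \<subseteq> {0..1}"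
    and \<rho>_ends: "\<And>tau u. tau \<in> {0..1} \<Longrightarrow> u = 0 \<or> u = 1 \<Longrightarrow> \<rho> (tau, u) = 0 \<or> \<rho> (tau, u) = 1"
    and g0: "\<And>t s. (t, s) \<in> param_dom n \<Longrightarrow> g0 (hparam n (t, s)) = hpull n f (t, s(j := \<rho> (0, s j)))"
    and g1: "\<And>t s. (t, s) \<in> param_dom n \<Longrightarrow> g1 (hparam n (t, s)) = hpull n f (t, s(j := \<rho> (1, s j)))"
  shows "hhomotopic n X x0 g0 g1"
proof (rule hhomotopic_if_param_htpy)
  show n: "n \<ge> 1" using j by simp
  have "continuous_on (({0..1} \<times> radii) \<times> {0..1}) (\<lambda>x. \<rho> (fst (fst x), snd x))"
    by (intro continuous_on_compose2[OF \<rho>(1)] continuous_on_Pair continuous_on_fst continuous_on_snd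
        continuous_on_id) auto
  moreover have "(\<lambda>x. \<rho> (fst (fst x), snd x)) ` (({0..1} \<times> radii) \<times> {0..1}) \<subseteq> {0..1}"
    using \<rho>(2) by force
  moreover have "\<rho> (fst v, u) = 0 \<or> \<rho> (fst v, u) = 1" if "v \<in> {0..1} \<times> radii" "u = 0 \<or> u = 1" for v u
    using that by (intro \<rho>_ends) auto
  ultimately have "based_param_htpy n X x0
      (\<lambda>x. hpull n f (snd (fst x), (snd x)(j := (\<lambda>x. \<rho> (fst (fst x), snd x)) (fst x, snd x j))))"
    by (intro based_family_reparam_coordinate[OF j based_param_map_hpull[OF n f], where \<sigma> = snd])
      (auto intro: continuous_on_snd continuous_on_id)
  then show "based_param_htpy n X x0
      (\<lambda>x. hpull n f (snd (fst x), (snd x)(j := \<rho> (fst (fst x), snd x j))))"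
    by simp
qed (simp_all add: g0 g1)

definition hjoin :: "nat \<Rightarrow> nat \<Rightarrow> ((nat \<Rightarrow> real) \<Rightarrow> 'a) \<Rightarrow> ((nat \<Rightarrow> real) \<Rightarrow> 'a) \<Rightarrow> (nat \<Rightarrow> real) \<Rightarrow> 'a"
  where "hjoin n j f g = hlift n (cube_join j (hpull n f) (hpull n g))"

lemma based_param_map_cube_join:
  "j \<in> {1..n} \<Longrightarrow> f \<in> hmaps n X x0 \<Longrightarrow> g \<in> hmaps n X x0
    \<Longrightarrow> based_param_map n X x0 (cube_join j (hpull n f) (hpull n g))"
  by (intro based_family_cube_join based_param_map_hpull) auto

lemma hjoin_hparam:
  assumes "j \<in> {1..n}" "f \<in> hmaps n X x0" "g \<in> hmaps n X x0" "z \<in> param_dom n"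
  shows "hjoin n j f g (hparam n z) = cube_join j (hpull n f) (hpull n g) z"
  using assms hlift_hparam[OF _ based_param_map_cube_join] by (simp add: hjoin_def)

lemma hjoin_in_hmaps:
  "j \<in> {1..n} \<Longrightarrow> f \<in> hmaps n X x0 \<Longrightarrow> g \<in> hmaps n X x0 \<Longrightarrow> hjoin n j f g \<in> hmaps n X x0"
  unfolding hjoin_def by (intro hlift_in_hmaps based_param_map_cube_join) auto

lemma hjoin_cong:
  assumes j: "j \<in> {1..n}" and ff': "hhomotopic n X x0 f f'" and gg': "hhomotopic n X x0 g g'"
  shows "hhomotopic n X x0 (hjoin n j f g) (hjoin n j f' g')"
proof -
  have n: "n \<ge> 1" using j by simp
  obtain kf where kf: "continuous_map (prod_topology (top_of_set {0..1::real}) (hawaiian_top n)) X kf"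
    "\<And>x. kf (0, x) = f x" "\<And>x. kf (1, x) = f' x" "\<forall>tau\<in>{0..1}. kf (tau, hbase) = x0"
    using ff' unfolding homotopic_with_def by blast
  obtain kg where kg: "continuous_map (prod_topology (top_of_set {0..1::real}) (hawaiian_top n)) X kg"
    "\<And>x. kg (0, x) = g x" "\<And>x. kg (1, x) = g' x" "\<forall>tau\<in>{0..1}. kg (tau, hbase) = x0"
    using gg' unfolding homotopic_with_def by blast
  have maps: "f \<in> hmaps n X x0" "g \<in> hmaps n X x0" "f' \<in> hmaps n X x0" "g' \<in> hmaps n X x0"
    using hhomotopic_imp_hmaps[OF ff'] hhomotopic_imp_hmaps[OF gg'] by auto
  show ?thesis
  proof (rule hhomotopic_if_param_htpy[OF n])
    show "based_param_htpy n X x0 (cube_join j (kf \<circ> htpy_param n) (kg \<circ> htpy_param n))"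
      using kf(4) kg(4)
      by (intro based_family_cube_join[OF j] based_param_htpy_of_homotopy[OF n kf(1)]
          based_param_htpy_of_homotopy[OF n kg(1)]) auto
  next
    fix t s assume z: "(t, s) \<in> param_dom n"
    show "hjoin n j f g (hparam n (t, s)) = cube_join j (kf \<circ> htpy_param n) (kg \<circ> htpy_param n) ((0, t), s)"
      using hjoin_hparam[OF j maps(1,2) z] kf(2) kg(2)
      by (simp add: cube_join_def htpy_param_def hpull_def)
    show "hjoin n j f' g' (hparam n (t, s)) = cube_join j (kf \<circ> htpy_param n) (kg \<circ> htpy_param n) ((1, t), s)"
      using hjoin_hparam[OF j maps(3,4) z] kf(3) kg(3)
      by (simp add: cube_join_def htpy_param_def hpull_def)
  qed
qed

lemma hmul_hparam:
  assumes n: "n \<ge> 1" and f: "f \<in> hmaps n X x0" and g: "g \<in> hmaps n X x0" and z: "z \<in> param_dom n"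
  shows "hmul n f g (hparam n z) = cube_join 1 (hpull n f) (hpull n g) z"
proof (cases "param_boundary n z")
  case True
  then have "hparam n z = hbase" using hparam_eq_hbase_iff[OF n z] by simp
  moreover have "cube_join 1 (hpull n f) (hpull n g) z = x0"
    using True z n by (intro based_param_map_boundary[OF based_param_map_cube_join[OF _ f g]]) auto
  ultimately show ?thesis using f by (simp add: hmul_def hmaps_def)
next
  case False
  obtain t s where ts: "z = (t, s)" "t \<in> radii" "s \<in> hcube n" using z by (auto simp: param_dom_def)
  obtain k where k: "k \<ge> 1" "t = 1 / real k"
    using ts(2) False ts(1) by (cases rule: radiiE) (auto simp: param_boundary_def)
  have nonbase: "hparam n z \<noteq> hbase" using hparam_eq_hbase_iff[OF n z] False by simp
  define s' where "s' = (SOME s'. s' \<in> hcube n \<and> hquot n k s' = hparam n z)"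
  have "s' \<in> hcube n \<and> hquot n k s' = hparam n z"
    unfolding s'_def by (rule someI[of _ s]) (use ts k in \<open>simp add: hquot_eq_hparam\<close>)
  then have "s' = s"
    using hparam_inj[OF n z _ _ False, of "(1 / real k, s')"] ts k inverse_in_radii[OF k(1)]
    by (auto simp: hquot_eq_hparam param_dom_def)
  have "hindex n (hparam n z) = k" using hindex_hparam[OF n k(1)] nonbase ts k by simp
  then have "hmul n f g (hparam n z) = cube_concat (f \<circ> hquot n k) (g \<circ> hquot n k) s'"
    using nonbase by (simp add: hmul_def Let_def s'_def)
  then show ?thesis
    using \<open>s' = s\<close> ts k by (simp add: cube_concat_def cube_join_def hpull_def hquot_eq_hparam)
qed

lemma hmul_hhomotopic_hjoin:
  assumes n: "n \<ge> 1" and f: "f \<in> hmaps n X x0" and g: "g \<in> hmaps n X x0"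
  shows "hhomotopic n X x0 (hmul n f g) (hjoin n 1 f g)"
  using n f g by (intro hhomotopic_if_param_eq[OF n based_param_map_cube_join[OF _ f g, of 1]])
    (auto simp: hmul_hparam hjoin_hparam)

subsection \<open>The Eckmann--Hilton argument\<close>

declare homotopic_with_trans [trans]

lemma hjoin_const_right:
  assumes j: "j \<in> {1..n}" and x0: "x0 \<in> topspace X" and f: "f \<in> hmaps n X x0"
  shows "hhomotopic n X x0 (hjoin n j f (\<lambda>_. x0)) f"
proof -
  let ?\<rho> = "\<lambda>(tau::real, u). min 1 (2 * u / (1 + tau))"
  show ?thesis
  proof (rule hhomotopic_reparam[OF j f, where \<rho> = ?\<rho>])
    show "continuous_on ({0..1} \<times> {0..1}) ?\<rho>"
      by (auto simp: split_beta intro!: continuous_intros)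
  next
    fix t s assume z: "(t, s) \<in> param_dom n"
    have "0 \<le> s j" "s j \<le> 1" using z hcube_coordinate[OF _ j] by (auto simp: param_dom_def)
    moreover have "?\<rho> (0, s j) = (if s j \<le> 1/2 then 2 * s j else 1)" by auto
    ultimately show "hjoin n j f (\<lambda>_. x0) (hparam n (t, s)) = hpull n f (t, s(j := ?\<rho> (0, s j)))"
      using hjoin_hparam[OF j f const_in_hmaps[OF x0] z] hpull_boundary[OF j f z, of 1]
      by (simp add: cube_join_def)
    show "f (hparam n (t, s)) = hpull n f (t, s(j := ?\<rho> (1, s j)))"
      using \<open>s j \<le> 1\<close> by (simp add: hpull_def)
  qed (auto simp: divide_le_eq)
qed

lemma hjoin_const_left:
  assumes j: "j \<in> {1..n}" and x0: "x0 \<in> topspace X" and f: "f \<in> hmaps n X x0"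
  shows "hhomotopic n X x0 (hjoin n j (\<lambda>_. x0) f) f"
proof -
  let ?\<rho> = "\<lambda>(tau::real, u). max 0 ((2 * u - 1 + tau) / (1 + tau))"
  show ?thesis
  proof (rule hhomotopic_reparam[OF j f, where \<rho> = ?\<rho>])
    show "continuous_on ({0..1} \<times> {0..1}) ?\<rho>"
      by (auto simp: split_beta intro!: continuous_intros)
  next
    fix t s assume z: "(t, s) \<in> param_dom n"
    have "0 \<le> s j" "s j \<le> 1" using z hcube_coordinate[OF _ j] by (auto simp: param_dom_def)
    moreover have "?\<rho> (0, s j) = (if s j \<le> 1/2 then 0 else 2 * s j - 1)" by auto
    ultimately show "hjoin n j (\<lambda>_. x0) f (hparam n (t, s)) = hpull n f (t, s(j := ?\<rho> (0, s j)))"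
      using hjoin_hparam[OF j const_in_hmaps[OF x0] f z] hpull_boundary[OF j f z, of 0]
      by (simp add: cube_join_def)
    show "f (hparam n (t, s)) = hpull n f (t, s(j := ?\<rho> (1, s j)))"
      using \<open>0 \<le> s j\<close> by (simp add: hpull_def)
  qed (auto simp: divide_le_eq divide_le_0_iff)
qed

definition hrev :: "nat \<Rightarrow> nat \<Rightarrow> ((nat \<Rightarrow> real) \<Rightarrow> 'a) \<Rightarrow> (nat \<Rightarrow> real) \<Rightarrow> 'a" where
  "hrev n j f = hlift n (\<lambda>z. hpull n f (fst z, (snd z)(j := 1 - snd z j)))"

lemma based_param_map_reverse:
  assumes j: "j \<in> {1..n}" and f: "f \<in> hmaps n X x0"
  shows "based_param_map n X x0 (\<lambda>z. hpull n f (fst z, (snd z)(j := 1 - snd z j)))"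
proof -
  have "based_param_map n X x0
      (\<lambda>z. hpull n f (id (fst z), (snd z)(j := (\<lambda>(t, u). 1 - u) (fst z, snd z j))))"
    using j by (intro based_family_reparam_coordinate[OF j based_param_map_hpull[OF _ f]])
      (auto simp: split_beta intro!: continuous_intros)
  then show ?thesis by simp
qed

lemma hrev_hparam:
  assumes j: "j \<in> {1..n}" and f: "f \<in> hmaps n X x0" and z: "(t, s) \<in> param_dom n"
  shows "hrev n j f (hparam n (t, s)) = hpull n f (t, s(j := 1 - s j))"
  using hlift_hparam[OF _ based_param_map_reverse[OF j f] z] j by (simp add: hrev_def)

lemma hrev_in_hmaps: "j \<in> {1..n} \<Longrightarrow> f \<in> hmaps n X x0 \<Longrightarrow> hrev n j f \<in> hmaps n X x0"
  unfolding hrev_def by (intro hlift_in_hmaps based_param_map_reverse) auto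

text \<open>The loop \<open>hrev f\<close> followed by \<open>f\<close> is \<open>f\<close> reparametrized by the tent \<open>u \<mapsto> \<bar>2u - 1\<bar>\<close>, which
  contracts onto the boundary value 1.\<close>

lemma hjoin_hrev_left:
  assumes j: "j \<in> {1..n}" and f: "f \<in> hmaps n X x0"
  shows "hhomotopic n X x0 (hjoin n j (hrev n j f) f) (\<lambda>_. x0)"
proof -
  let ?\<rho> = "\<lambda>(tau::real, u). tau + (1 - tau) * \<bar>2 * u - 1\<bar>"
  show ?thesis
  proof (rule hhomotopic_reparam[OF j f, where \<rho> = ?\<rho>])
    show "continuous_on ({0..1} \<times> {0..1}) ?\<rho>"
      by (auto simp: split_beta intro!: continuous_intros)
    have "tau + (1 - tau) * \<bar>2 * u - 1\<bar> \<in> {0..1}" if "tau \<in> {0..1}" "u \<in> {0..1}" for tau u :: real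
    proof -
      have "(1 - tau) * \<bar>2 * u - 1\<bar> \<le> (1 - tau) * 1"
        using that by (intro mult_left_mono) (auto simp: abs_le_iff)
      then show ?thesis using that by auto
    qed
    then show "?\<rho> ` ({0..1} \<times> {0..1}) \<subseteq> {0..1}" by auto
  next
    fix t s assume z: "(t, s) \<in> param_dom n"
    have sj: "0 \<le> s j" "s j \<le> 1" using z hcube_coordinate[OF _ j] by (auto simp: param_dom_def)
    show "hjoin n j (hrev n j f) f (hparam n (t, s)) = hpull n f (t, s(j := ?\<rho> (0, s j)))"
    proof (cases "s j \<le> 1/2")
      case True
      then have "(t, s(j := 2 * s j)) \<in> param_dom n"
        using z sj hcube_fun_upd[OF _ j] by (auto simp: param_dom_def)
      moreover have "\<bar>2 * s j - 1\<bar> = 1 - 2 * s j" using True by simp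
      ultimately show ?thesis
        using True hjoin_hparam[OF j hrev_in_hmaps[OF j f] f z] hrev_hparam[OF j f]
        by (simp add: cube_join_def hpull_def[of _ "hrev n j f"])
    next
      case False
      moreover have "\<bar>2 * s j - 1\<bar> = 2 * s j - 1" using False by simp
      ultimately show ?thesis using hjoin_hparam[OF j hrev_in_hmaps[OF j f] f z] by (simp add: cube_join_def)
    qed
    show "x0 = hpull n f (t, s(j := ?\<rho> (1, s j)))"
      using hpull_boundary[OF j f z, of 1] by simp
  qed auto
qed

lemma hjoin_interchange:
  assumes i: "i \<in> {1..n}" and j: "j \<in> {1..n}" and "i \<noteq> j"
    and a: "a \<in> hmaps n X x0" and b: "b \<in> hmaps n X x0"
    and c: "c \<in> hmaps n X x0" and d: "d \<in> hmaps n X x0"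
  shows "hhomotopic n X x0 (hjoin n i (hjoin n j a b) (hjoin n j c d)) (hjoin n j (hjoin n i a c) (hjoin n i b d))"
proof (rule hhomotopic_if_param_eq)
  show n: "n \<ge> 1" using i by simp
  let ?F = "cube_join i (cube_join j (hpull n a) (hpull n b)) (cube_join j (hpull n c) (hpull n d))"
  show "based_param_map n X x0 ?F"
    by (intro based_family_cube_join[OF i] based_param_map_cube_join[OF j] a b c d)
  fix z assume z: "z \<in> param_dom n"
  show "hjoin n i (hjoin n j a b) (hjoin n j c d) (hparam n z) = ?F z"
    unfolding hjoin_hparam[OF i hjoin_in_hmaps[OF j a b] hjoin_in_hmaps[OF j c d] z]
    by (rule cube_join_cong[OF i z]) (simp_all add: hpull_def[of _ "hjoin n j _ _"] hjoin_hparam[OF j a b] hjoin_hparam[OF j c d])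
  have "hjoin n j (hjoin n i a c) (hjoin n i b d) (hparam n z)
      = cube_join j (cube_join i (hpull n a) (hpull n c)) (cube_join i (hpull n b) (hpull n d)) z"
    unfolding hjoin_hparam[OF j hjoin_in_hmaps[OF i a c] hjoin_in_hmaps[OF i b d] z]
    by (rule cube_join_cong[OF j z]) (simp_all add: hpull_def[of _ "hjoin n i _ _"] hjoin_hparam[OF i a c] hjoin_hparam[OF i b d])
  then show "hjoin n j (hjoin n i a c) (hjoin n i b d) (hparam n z) = ?F z"
    using cube_join_interchange[OF \<open>i \<noteq> j\<close>, of "hpull n a" "hpull n b" "hpull n c" "hpull n d" z]
    by simp
qed

lemma hjoin_hhomotopic_coordinates:
  assumes i: "i \<in> {1..n}" and j: "j \<in> {1..n}" and "i \<noteq> j" and x0: "x0 \<in> topspace X"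
    and a: "a \<in> hmaps n X x0" and b: "b \<in> hmaps n X x0"
  shows "hhomotopic n X x0 (hjoin n i a b) (hjoin n j a b)"
proof -
  note e = const_in_hmaps[OF x0]
  have "hhomotopic n X x0 (hjoin n i a b) (hjoin n i (hjoin n j a (\<lambda>_. x0)) (hjoin n j (\<lambda>_. x0) b))"
    by (rule hjoin_cong[OF i homotopic_with_symD[OF hjoin_const_right[OF j x0 a]]
          homotopic_with_symD[OF hjoin_const_left[OF j x0 b]]])
  also have "hhomotopic n X x0 \<dots> (hjoin n j (hjoin n i a (\<lambda>_. x0)) (hjoin n i (\<lambda>_. x0) b))"
    by (rule hjoin_interchange[OF i j \<open>i \<noteq> j\<close> a e e b])
  also have "hhomotopic n X x0 \<dots> (hjoin n j a b)"
    by (rule hjoin_cong[OF j hjoin_const_right[OF i x0 a] hjoin_const_left[OF i x0 b]])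
  finally show ?thesis .
qed

lemma hjoin_commute:
  assumes i: "i \<in> {1..n}" and j: "j \<in> {1..n}" and "i \<noteq> j" and x0: "x0 \<in> topspace X"
    and a: "a \<in> hmaps n X x0" and b: "b \<in> hmaps n X x0"
  shows "hhomotopic n X x0 (hjoin n i a b) (hjoin n i b a)"
proof -
  note e = const_in_hmaps[OF x0]
  have "hhomotopic n X x0 (hjoin n i a b) (hjoin n i (hjoin n j (\<lambda>_. x0) a) (hjoin n j b (\<lambda>_. x0)))"
    by (rule hjoin_cong[OF i homotopic_with_symD[OF hjoin_const_left[OF j x0 a]]
          homotopic_with_symD[OF hjoin_const_right[OF j x0 b]]])
  also have "hhomotopic n X x0 \<dots> (hjoin n j (hjoin n i (\<lambda>_. x0) b) (hjoin n i a (\<lambda>_. x0)))"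
    by (rule hjoin_interchange[OF i j \<open>i \<noteq> j\<close> e a b e])
  also have "hhomotopic n X x0 \<dots> (hjoin n j b a)"
    by (rule hjoin_cong[OF j hjoin_const_left[OF i x0 b] hjoin_const_right[OF i x0 a]])
  also have "hhomotopic n X x0 \<dots> (hjoin n i b a)"
    by (rule homotopic_with_symD[OF hjoin_hhomotopic_coordinates[OF i j \<open>i \<noteq> j\<close> x0 b a]])
  finally show ?thesis .
qed

lemma hjoin_assoc:
  assumes i: "i \<in> {1..n}" and j: "j \<in> {1..n}" and "i \<noteq> j" and x0: "x0 \<in> topspace X"
    and a: "a \<in> hmaps n X x0" and b: "b \<in> hmaps n X x0" and c: "c \<in> hmaps n X x0"
  shows "hhomotopic n X x0 (hjoin n i (hjoin n i a b) c) (hjoin n i a (hjoin n i b c))"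
proof -
  note e = const_in_hmaps[OF x0] and bc = hjoin_in_hmaps[OF i b c]
  have "hhomotopic n X x0 (hjoin n i (hjoin n i a b) c) (hjoin n i (hjoin n j a b) (hjoin n j (\<lambda>_. x0) c))"
    by (rule hjoin_cong[OF i hjoin_hhomotopic_coordinates[OF i j \<open>i \<noteq> j\<close> x0 a b]
          homotopic_with_symD[OF hjoin_const_left[OF j x0 c]]])
  also have "hhomotopic n X x0 \<dots> (hjoin n j (hjoin n i a (\<lambda>_. x0)) (hjoin n i b c))"
    by (rule hjoin_interchange[OF i j \<open>i \<noteq> j\<close> a b e c])
  also have "hhomotopic n X x0 \<dots> (hjoin n j a (hjoin n i b c))"
    by (rule hjoin_cong[OF j hjoin_const_right[OF i x0 a] hhomotopic_refl[OF bc]])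
  also have "hhomotopic n X x0 \<dots> (hjoin n i a (hjoin n i b c))"
    by (rule homotopic_with_symD[OF hjoin_hhomotopic_coordinates[OF i j \<open>i \<noteq> j\<close> x0 a bc]])
  finally show ?thesis .
qed

lemma hclass_eq:
  assumes "hhomotopic n X x0 f g" shows "hclass n X x0 f = hclass n X x0 g"
  unfolding hclass_def
  using homotopic_with_trans[OF assms] homotopic_with_trans[OF homotopic_with_symD[OF assms]] by blast

lemma carrier_hawaiian_group: "carrier (hawaiian_group n X x0) = hclass n X x0 ` hmaps n X x0"
  by (auto simp: hawaiian_group_def hmaps_def)

lemma hawaiian_group_mult:
  assumes n: "n \<ge> 1" and f: "f \<in> hmaps n X x0" and g: "g \<in> hmaps n X x0"
  shows "hclass n X x0 f \<otimes>\<^bsub>hawaiian_group n X x0\<^esub> hclass n X x0 g = hclass n X x0 (hjoin n 1 f g)"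
proof -
  have rep: "hhomotopic n X x0 h (SOME h'. h' \<in> hclass n X x0 h)" if "h \<in> hmaps n X x0" for h
  proof -
    have "h \<in> hclass n X x0 h" using that by (simp add: hclass_def hmaps_def)
    then have "(SOME h'. h' \<in> hclass n X x0 h) \<in> hclass n X x0 h"
      by (rule someI[where P = "\<lambda>h'. h' \<in> hclass n X x0 h"])
    then show ?thesis by (simp add: hclass_def)
  qed
  define f' where "f' = (SOME h'. h' \<in> hclass n X x0 f)"
  define g' where "g' = (SOME h'. h' \<in> hclass n X x0 g)"
  have ff': "hhomotopic n X x0 f f'" and gg': "hhomotopic n X x0 g g'"
    using rep[OF f] rep[OF g] by (simp_all add: f'_def g'_def)
  have "hhomotopic n X x0 (hmul n f' g') (hjoin n 1 f' g')"
    using hhomotopic_imp_hmaps[OF ff'] hhomotopic_imp_hmaps[OF gg'] by (intro hmul_hhomotopic_hjoin[OF n]) auto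
  also have "hhomotopic n X x0 \<dots> (hjoin n 1 f g)"
    using n by (intro hjoin_cong homotopic_with_symD[OF ff'] homotopic_with_symD[OF gg']) auto
  finally show ?thesis by (simp add: hawaiian_group_def f'_def g'_def hclass_eq)
qed

theorem theorem2p3:
  fixes X :: "'a topology" and x0 :: 'a and n :: nat
  assumes "x0 \<in> topspace X" and "n \<ge> 2"
  shows "comm_group (hawaiian_group n X x0)"
proof -
  note x0 = assms(1)
  have n: "n \<ge> 1" and i: "1 \<in> {1..n}" and j: "2 \<in> {1..n}" using assms(2) by auto
  let ?G = "hawaiian_group n X x0" and ?C = "hclass n X x0" and ?M = "hmaps n X x0"
  have one: "\<one>\<^bsub>?G\<^esub> = ?C (\<lambda>_. x0)" by (simp add: hawaiian_group_def)
  note mult = hawaiian_group_mult[OF n] and join = hjoin_in_hmaps[OF i] and e = const_in_hmaps[OF x0]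
  show ?thesis
  proof (rule comm_groupI, unfold carrier_hawaiian_group)
    show "\<one>\<^bsub>?G\<^esub> \<in> ?C ` ?M" using one e by simp
  next
    fix x y assume "x \<in> ?C ` ?M" "y \<in> ?C ` ?M"
    then obtain f g where f: "f \<in> ?M" and g: "g \<in> ?M" and xy: "x = ?C f" "y = ?C g" by blast
    show "x \<otimes>\<^bsub>?G\<^esub> y \<in> ?C ` ?M"
      unfolding xy mult[OF f g] using join[OF f g] by (rule imageI)
    show "x \<otimes>\<^bsub>?G\<^esub> y = y \<otimes>\<^bsub>?G\<^esub> x"
      unfolding xy mult[OF f g] mult[OF g f] by (rule hclass_eq[OF hjoin_commute[OF i j _ x0 f g]]) simp
  next
    fix x y z assume "x \<in> ?C ` ?M" "y \<in> ?C ` ?M" "z \<in> ?C ` ?M"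
    then obtain f g h where f: "f \<in> ?M" and g: "g \<in> ?M" and h: "h \<in> ?M"
      and xyz: "x = ?C f" "y = ?C g" "z = ?C h" by blast
    show "x \<otimes>\<^bsub>?G\<^esub> y \<otimes>\<^bsub>?G\<^esub> z = x \<otimes>\<^bsub>?G\<^esub> (y \<otimes>\<^bsub>?G\<^esub> z)"
      unfolding xyz mult[OF f g] mult[OF g h] mult[OF join[OF f g] h] mult[OF f join[OF g h]]
      by (rule hclass_eq[OF hjoin_assoc[OF i j _ x0 f g h]]) simp
  next
    fix x assume "x \<in> ?C ` ?M"
    then obtain f where f: "f \<in> ?M" and x: "x = ?C f" by blast
    show "\<one>\<^bsub>?G\<^esub> \<otimes>\<^bsub>?G\<^esub> x = x"
      unfolding x one mult[OF e f] by (rule hclass_eq[OF hjoin_const_left[OF i x0 f]])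
    have "?C (hrev n 1 f) \<otimes>\<^bsub>?G\<^esub> x = \<one>\<^bsub>?G\<^esub>"
      unfolding x one mult[OF hrev_in_hmaps[OF i f] f] by (rule hclass_eq[OF hjoin_hrev_left[OF i f]])
    then show "\<exists>y\<in>?C ` ?M. y \<otimes>\<^bsub>?G\<^esub> x = \<one>\<^bsub>?G\<^esub>" using hrev_in_hmaps[OF i f] by blast
  qed
qed

end
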